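(* For every set $\mathcal X$ of $n$ entities, each moving along a trajectory of $\tau$ edges (in general position), and every $\varepsilon\ge 0$, the Reeb graph $\mathcal R=(V,E)$ has $O(\tau n^2)$ vertices and $O(\tau n^2)$ edges. These bounds are tight in the worst case: there are inputs for which $\mathcal R$ has $\Omega(\tau n^2)$ vertices and edges.
   Context: Let $\mathcal X$ be a set of $n$ entities. All trajectories are sampled at common times $t_0<t_1<\dots<t_\tau$; each entity $x$ has a position $x(t_i)\in\mathbb R^2$ at each $t_i$ and moves with constant velocity between consecutive sample times, so its trajectory is a polygonal path with $\tau$ edges defined on $[t_0,t_\tau]$. Fix $\varepsilon\ge 0$. Two entities $x,y$ are directly connected at time $t$ if their closed discs of radius $\varepsilon$ centred at $x(t)$ and $y(t)$ intersect, i.e. $\|x(t)-y(t)\|\le 2\varepsilon$. They are $\varepsilon$-connected at time $t$ if there is a sequence $x=x_0,\dots,x_k=y$ of entities with $x_i,x_{i+1}$ directly connected at $t$ for all $i$. A component at time $t$ is a maximal set of pairwise $\varepsilon$-connected entities; the components at time $t$ partition $\mathcal X$. General position: no two distinct events at which a pair of entities becomes directly connected or directly disconnected occur at the same time. The Reeb graph $\mathcal R$ is the directed graph describing the evolution of the components over $[t_0,t_\tau]$: it has a start vertex for each component at $t_0$ (in-degree 0, out-degree 1), an end vertex for each component at $t_\tau$ (in-degree 1, out-degree 0), a merge vertex (in-degree 2, out-degree 1) at each time two components unite into one, and a split vertex (in-degree 1, out-degree 2) at each time a component splits into two; each vertex $v$ has a time $t_v$, and each edge $e=(u,v)$ with $t_u<t_v$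 corresponds to a set $C_e$ of entities that is a component at every time in $[t_u,t_v]$. *)

theory Defs
  imports "HOL-Analysis.Analysis"
begin

text \<open>Entities are the indices 0..<n.  Sample times T 0 < T 1 < ... < T tau.
  P x i is the position of entity x at time T i.  Positions are in the plane real^2.\<close>

type_synonym point = "real^2"

definition seg :: "(nat \<Rightarrow> real) \<Rightarrow> real \<Rightarrow> nat" where
  "seg T t = (LEAST i. t \<le> T (Suc i))"

definition pos :: "(nat \<Rightarrow> real) \<Rightarrow> (nat \<Rightarrow> nat \<Rightarrow> point) \<Rightarrow> nat \<Rightarrow> real \<Rightarrow> point" where
  "pos T P x t = (let i = seg T t in
      P x i + ((t - T i) / (T (Suc i) - T i)) *\<^sub>R (P x (Suc i) - P x i))"

definition directly_connected ::
  "(nat \<Rightarrow> real) \<Rightarrow> (nat \<Rightarrow> nat \<Rightarrow> point) \<Rightarrow> real \<Rightarrow> nat \<Rightarrow> nat \<Rightarrow> real \<Rightarrow> bool" where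
  "directly_connected T P \<epsilon> x y t \<longleftrightarrow> dist (pos T P x t) (pos T P y t) \<le> 2 * \<epsilon>"

definition conn_rel ::
  "nat \<Rightarrow> (nat \<Rightarrow> real) \<Rightarrow> (nat \<Rightarrow> nat \<Rightarrow> point) \<Rightarrow> real \<Rightarrow> real \<Rightarrow> (nat \<times> nat) set" where
  "conn_rel n T P \<epsilon> t = {(x, y). x < n \<and> y < n \<and> directly_connected T P \<epsilon> x y t}\<^sup>*"

definition components ::
  "nat \<Rightarrow> (nat \<Rightarrow> real) \<Rightarrow> (nat \<Rightarrow> nat \<Rightarrow> point) \<Rightarrow> real \<Rightarrow> real \<Rightarrow> nat set set" where
  "components n T P \<epsilon> t = {..<n} // conn_rel n T P \<epsilon> t"

definition comp_on ::
  "nat \<Rightarrow> (nat \<Rightarrow> real) \<Rightarrow> (nat \<Rightarrow> nat \<Rightarrow> point) \<Rightarrow> real \<Rightarrow> nat set \<Rightarrow> real set \<Rightarrow> bool" where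
  "comp_on n T P \<epsilon> D I \<longleftrightarrow> (\<forall>t\<in>I. D \<in> components n T P \<epsilon> t)"

definition becomes_connected ::
  "nat \<Rightarrow> (nat \<Rightarrow> real) \<Rightarrow> (nat \<Rightarrow> nat \<Rightarrow> point) \<Rightarrow> real \<Rightarrow> nat \<Rightarrow> nat \<Rightarrow> real \<Rightarrow> bool" where
  "becomes_connected \<tau> T P \<epsilon> x y s \<longleftrightarrow>
     T 0 < s \<and> s \<le> T \<tau> \<and> directly_connected T P \<epsilon> x y s \<and>
     (\<exists>\<delta>>0. \<forall>t\<in>{s - \<delta><..<s}. \<not> directly_connected T P \<epsilon> x y t)"

definition becomes_disconnected ::
  "nat \<Rightarrow> (nat \<Rightarrow> real) \<Rightarrow> (nat \<Rightarrow> nat \<Rightarrow> point) \<Rightarrow> real \<Rightarrow> nat \<Rightarrow> nat \<Rightarrow> real \<Rightarrow> bool" where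
  "becomes_disconnected \<tau> T P \<epsilon> x y s \<longleftrightarrow>
     T 0 \<le> s \<and> s < T \<tau> \<and> directly_connected T P \<epsilon> x y s \<and>
     (\<exists>\<delta>>0. \<forall>t\<in>{s<..<s + \<delta>}. \<not> directly_connected T P \<epsilon> x y t)"

definition pair_event ::
  "nat \<Rightarrow> nat \<Rightarrow> (nat \<Rightarrow> real) \<Rightarrow> (nat \<Rightarrow> nat \<Rightarrow> point) \<Rightarrow> real \<Rightarrow> nat \<Rightarrow> nat \<Rightarrow> real \<Rightarrow> bool \<Rightarrow> bool" where
  "pair_event n \<tau> T P \<epsilon> x y s b \<longleftrightarrow> x < n \<and> y < n \<and> x \<noteq> y \<and>
     (if b then becomes_connected \<tau> T P \<epsilon> x y s else becomes_disconnected \<tau> T P \<epsilon> x y s)"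

definition general_position ::
  "nat \<Rightarrow> nat \<Rightarrow> (nat \<Rightarrow> real) \<Rightarrow> (nat \<Rightarrow> nat \<Rightarrow> point) \<Rightarrow> real \<Rightarrow> bool" where
  "general_position n \<tau> T P \<epsilon> \<longleftrightarrow>
     (\<forall>x y s b x' y' b'. pair_event n \<tau> T P \<epsilon> x y s b \<and> pair_event n \<tau> T P \<epsilon> x' y' s b'
        \<longrightarrow> {x, y} = {x', y'} \<and> b = b')"

datatype vkind = StartV | EndV | MergeV | SplitV

type_synonym vertex = "real \<times> nat set \<times> vkind"

definition parts_before ::
  "nat \<Rightarrow> (nat \<Rightarrow> real) \<Rightarrow> (nat \<Rightarrow> nat \<Rightarrow> point) \<Rightarrow> real \<Rightarrow> real \<Rightarrow> nat set \<Rightarrow> nat set set" where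
  "parts_before n T P \<epsilon> s C = {A. A \<subseteq> C \<and> (\<exists>\<delta>>0. comp_on n T P \<epsilon> A {s - \<delta><..<s})}"

definition parts_after ::
  "nat \<Rightarrow> (nat \<Rightarrow> real) \<Rightarrow> (nat \<Rightarrow> nat \<Rightarrow> point) \<Rightarrow> real \<Rightarrow> real \<Rightarrow> nat set \<Rightarrow> nat set set" where
  "parts_after n T P \<epsilon> s C = {A. A \<subseteq> C \<and> (\<exists>\<delta>>0. comp_on n T P \<epsilon> A {s<..<s + \<delta>})}"

definition is_merge ::
  "nat \<Rightarrow> nat \<Rightarrow> (nat \<Rightarrow> real) \<Rightarrow> (nat \<Rightarrow> nat \<Rightarrow> point) \<Rightarrow> real \<Rightarrow> real \<Rightarrow> nat set \<Rightarrow> bool" where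
  "is_merge n \<tau> T P \<epsilon> s C \<longleftrightarrow> T 0 < s \<and> s \<le> T \<tau> \<and> C \<in> components n T P \<epsilon> s \<and>
     (\<exists>A B. A \<noteq> B \<and> A \<union> B = C \<and>
        (\<exists>\<delta>>0. comp_on n T P \<epsilon> A {s - \<delta><..<s} \<and> comp_on n T P \<epsilon> B {s - \<delta><..<s}))"

definition is_split ::
  "nat \<Rightarrow> nat \<Rightarrow> (nat \<Rightarrow> real) \<Rightarrow> (nat \<Rightarrow> nat \<Rightarrow> point) \<Rightarrow> real \<Rightarrow> real \<Rightarrow> nat set \<Rightarrow> bool" where
  "is_split n \<tau> T P \<epsilon> s C \<longleftrightarrow> T 0 \<le> s \<and> s < T \<tau> \<and> C \<in> components n T P \<epsilon> s \<and>
     (\<exists>A B. A \<noteq> B \<and> A \<union> B = C \<and>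
        (\<exists>\<delta>>0. comp_on n T P \<epsilon> A {s<..<s + \<delta>} \<and> comp_on n T P \<epsilon> B {s<..<s + \<delta>}))"

definition reeb_vertices ::
  "nat \<Rightarrow> nat \<Rightarrow> (nat \<Rightarrow> real) \<Rightarrow> (nat \<Rightarrow> nat \<Rightarrow> point) \<Rightarrow> real \<Rightarrow> vertex set" where
  "reeb_vertices n \<tau> T P \<epsilon> =
     {(T 0, C, StartV) | C. C \<in> components n T P \<epsilon> (T 0)} \<union>
     {(T \<tau>, C, EndV) | C. C \<in> components n T P \<epsilon> (T \<tau>)} \<union>
     {(s, C, MergeV) | s C. is_merge n \<tau> T P \<epsilon> s C} \<union>
     {(s, C, SplitV) | s C. is_split n \<tau> T P \<epsilon> s C}"

fun out_sets ::
  "nat \<Rightarrow> (nat \<Rightarrow> real) \<Rightarrow> (nat \<Rightarrow> nat \<Rightarrow> point) \<Rightarrow> real \<Rightarrow> vertex \<Rightarrow> nat set set" where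
  "out_sets n T P \<epsilon> (s, C, StartV) = {C}"
| "out_sets n T P \<epsilon> (s, C, MergeV) = {C}"
| "out_sets n T P \<epsilon> (s, C, SplitV) = parts_after n T P \<epsilon> s C"
| "out_sets n T P \<epsilon> (s, C, EndV) = {}"

fun in_sets ::
  "nat \<Rightarrow> (nat \<Rightarrow> real) \<Rightarrow> (nat \<Rightarrow> nat \<Rightarrow> point) \<Rightarrow> real \<Rightarrow> vertex \<Rightarrow> nat set set" where
  "in_sets n T P \<epsilon> (s, C, StartV) = {}"
| "in_sets n T P \<epsilon> (s, C, MergeV) = parts_before n T P \<epsilon> s C"
| "in_sets n T P \<epsilon> (s, C, SplitV) = {C}"
| "in_sets n T P \<epsilon> (s, C, EndV) = {C}"

text \<open>An edge (u, D, v): D leaves u, enters v, and is a component throughout (t_u, t_v).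
  The component D is recorded so that parallel edges are counted separately.\<close>
definition reeb_edges ::
  "nat \<Rightarrow> nat \<Rightarrow> (nat \<Rightarrow> real) \<Rightarrow> (nat \<Rightarrow> nat \<Rightarrow> point) \<Rightarrow> real \<Rightarrow> (vertex \<times> nat set \<times> vertex) set" where
  "reeb_edges n \<tau> T P \<epsilon> =
     {(u, D, v). u \<in> reeb_vertices n \<tau> T P \<epsilon> \<and> v \<in> reeb_vertices n \<tau> T P \<epsilon> \<and>
        fst u < fst v \<and> D \<in> out_sets n T P \<epsilon> u \<and> D \<in> in_sets n T P \<epsilon> v \<and>
        comp_on n T P \<epsilon> D {fst u<..<fst v}}"

definition valid_input :: "nat \<Rightarrow> nat \<Rightarrow> (nat \<Rightarrow> real) \<Rightarrow> (nat \<Rightarrow> nat \<Rightarrow> point) \<Rightarrow> real \<Rightarrow> bool" where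
  "valid_input n \<tau> T P \<epsilon> \<longleftrightarrow> 1 \<le> \<tau> \<and> (\<forall>i<\<tau>. T i < T (Suc i)) \<and> 0 \<le> \<epsilon> \<and>
     general_position n \<tau> T P \<epsilon>"

end

theory Submission
  imports Defs
begin

text \<open>On a trajectory edge two entities move linearly relative to each other, so the times at
  which they are directly connected form an interval. Hence each pair becomes directly connected,
  and directly disconnected, at most once per edge: there are at most \<open>n\<^sup>2\<tau>\<close> events of each kind.
  A merge (split) at time \<open>s\<close> requires a pair inside the merged (splitting) component that becomes
  connected (disconnected) at \<open>s\<close>; by general position this pair, and with it the component, is
  unique for \<open>s\<close>. Together with the at most \<open>2n\<close> start and end vertices this bounds the vertices by
  \<open>4n\<^sup>2\<tau>\<close>. A vertex has at most two outgoing edges, and an edge is determined by its source and its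
  component, so there are at most twice as many edges as vertices.

  For the lower bound half of the entities oscillate past the other half so that on every edge
  every such pair meets once, alone, producing its own merge, edge and split.\<close>


lemma sym_rtrancl_Image_eq:
  assumes "sym r" "(x, a) \<in> r\<^sup>*"
  shows "r\<^sup>* `` {a} = r\<^sup>* `` {x}"
proof -
  have "(a, x) \<in> r\<^sup>*" using sym_rtrancl[OF assms(1)] assms(2) by (auto dest: symD)
  then show ?thesis using assms(2) by (auto intro: rtrancl_trans)
qed

lemma quotient_rtrancl_eq_Image:
  assumes "sym r" "A \<in> X // r\<^sup>*" "a \<in> A"
  shows "A = r\<^sup>* `` {a}"
  using assms sym_rtrancl_Image_eq[OF assms(1)] by (auto simp: quotient_def)

lemma quotient_rtrancl_eqI:
  assumes "sym r" "A \<in> X // r\<^sup>*" "B \<in> X // r\<^sup>*" "a \<in> A" "a \<in> B"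
  shows "A = B"
  using quotient_rtrancl_eq_Image[OF assms(1,2,4)] quotient_rtrancl_eq_Image[OF assms(1,3,5)]
  by simp

lemma quotient_rtrancl_subset_eq:
  assumes "sym r" "sym r'" "C \<in> X // r\<^sup>*" "A \<in> X // r'\<^sup>*" "A \<subseteq> C"
    and kept: "\<And>z w. z \<in> C \<Longrightarrow> (z, w) \<in> r \<Longrightarrow> (z, w) \<in> r'"
  shows "A = C"
proof -
  obtain a where a: "a \<in> A" using assms(4) by (auto simp: quotient_def)
  have C: "C = r\<^sup>* `` {a}" using quotient_rtrancl_eq_Image[OF assms(1,3)] a assms(5) by auto
  have A: "A = r'\<^sup>* `` {a}" using quotient_rtrancl_eq_Image[OF assms(2,4) a] .
  have "(a, y) \<in> r'\<^sup>*" if "(a, y) \<in> r\<^sup>*" for y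
    using that
  proof (induction rule: rtrancl_induct)
    case (step z w)
    then have "(z, w) \<in> r'" using kept C by auto
    with step.IH show ?case by (rule rtrancl_into_rtrancl)
  qed simp
  then have "C \<subseteq> A" using A C by auto
  with assms(5) show ?thesis by auto
qed

lemma rtrancl_avoiding_pair:
  assumes "(a, z) \<in> r\<^sup>*"
  shows "(a, z) \<in> {p \<in> r. {fst p, snd p} \<noteq> {a, b}}\<^sup>* \<or> (b, z) \<in> {p \<in> r. {fst p, snd p} \<noteq> {a, b}}\<^sup>*"
  using assms
proof (induction rule: rtrancl_induct)
  case (step z w)
  show ?case
  proof (cases "{z, w} = {a, b}")
    case True
    then have "w = a \<or> w = b" by auto
    then show ?thesis by auto
  next
    case False
    with step.hyps have "(z, w) \<in> {p \<in> r. {fst p, snd p} \<noteq> {a, b}}" by auto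
    with step.IH show ?thesis by (meson rtrancl_into_rtrancl)
  qed
qed simp

lemma finite_card_le_if_one_per_piece:
  assumes cover: "S \<subseteq> (\<Union>i<k. I i)"
    and one: "\<And>i s s'. i < k \<Longrightarrow> s \<in> S \<inter> I i \<Longrightarrow> s' \<in> S \<inter> I i \<Longrightarrow> s = s'"
  shows "finite S \<and> card S \<le> k"
proof -
  define f where "f s = (SOME i. i < k \<and> s \<in> I i)" for s
  have f: "f s < k \<and> s \<in> I (f s)" if "s \<in> S" for s
  proof -
    have "\<exists>i. i < k \<and> s \<in> I i" using cover that by auto
    then show ?thesis unfolding f_def by (rule someI_ex)
  qed
  have inj: "inj_on f S"
  proof (rule inj_onI)
    fix s s' assume s: "s \<in> S" "s' \<in> S" "f s = f s'"
    have "f s < k" "s \<in> S \<inter> I (f s)" "s' \<in> S \<inter> I (f s)" using f[OF s(1)] f[OF s(2)] s by auto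
    then show "s = s'" by (rule one)
  qed
  have sub: "f ` S \<subseteq> {..<k}" using f by auto
  have "finite S" using finite_imageD[OF finite_subset[OF sub] inj] by simp
  moreover have "card S \<le> k" using card_inj_on_le[OF inj sub] by simp
  ultimately show ?thesis ..
qed

lemma finite_card_le_if_unique_per_time:
  assumes "\<And>s C C'. R s C \<Longrightarrow> R s C' \<Longrightarrow> C = C'" "\<And>s C. R s C \<Longrightarrow> s \<in> S" "finite S"
  shows "finite {(s, C). R s C} \<and> card {(s, C). R s C} \<le> card S"
proof -
  have inj: "inj_on fst {(s, C). R s C}"
  proof (rule inj_onI)
    fix p q assume "p \<in> {(s, C). R s C}" "q \<in> {(s, C). R s C}" "fst p = fst q"
    then show "p = q" using assms(1)[of "fst p" "snd p" "snd q"] by (simp add: prod_eq_iff case_prod_beta)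
  qed
  have sub: "fst ` {(s, C). R s C} \<subseteq> S" using assms(2) by auto
  show ?thesis
    using finite_imageD[OF finite_subset[OF sub assms(3)] inj] card_inj_on_le[OF inj sub assms(3)]
    by simp
qed

lemma convex_eventually_at_left_mem:
  fixes S :: "real set"
  assumes "convex S" "a \<in> S" "b \<in> S" "a < b"
  shows "eventually (\<lambda>t. t \<in> S) (at_left b)"
proof -
  have "is_interval S" using assms(1) by (simp only: is_interval_convex_1)
  then have "x \<in> S" if "a \<le> x" "x \<le> b" for x
    using assms(2,3) that unfolding is_interval_1 by blast
  then have ab: "{a..b} \<subseteq> S" by auto
  show ?thesis using eventually_at_left_real[OF assms(4)] by (rule eventually_mono) (use ab in auto)
qed

lemma convex_eventually_at_right_mem:
  fixes S :: "real set"
  assumes "convex S" "a \<in> S" "b \<in> S" "a < b"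
  shows "eventually (\<lambda>t. t \<in> S) (at_right a)"
proof -
  have "is_interval S" using assms(1) by (simp only: is_interval_convex_1)
  then have "x \<in> S" if "a \<le> x" "x \<le> b" for x
    using assms(2,3) that unfolding is_interval_1 by blast
  then have ab: "{a..b} \<subseteq> S" by auto
  show ?thesis using eventually_at_right_real[OF assms(4)] by (rule eventually_mono) (use ab in auto)
qed

lemma convex_eventually_at_left_cases:
  fixes S :: "real set"
  assumes "convex S" "s \<in> S"
  shows "eventually (\<lambda>t. t \<in> S) (at_left s) \<or> eventually (\<lambda>t. t \<notin> S) (at_left s)"
proof (cases "\<exists>a<s. a \<in> S")
  case True
  then obtain a where a: "a < s" "a \<in> S" by blast
  show ?thesis using convex_eventually_at_left_mem[OF assms(1) a(2) assms(2) a(1)] by (rule disjI1)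
next
  case False
  have "eventually (\<lambda>t. t \<in> {s - 1<..<s}) (at_left s)" by (rule eventually_at_left_real) simp
  then have "eventually (\<lambda>t. t \<notin> S) (at_left s)" by (rule eventually_mono) (use False in auto)
  then show ?thesis by (rule disjI2)
qed

lemma convex_eventually_at_right_cases:
  fixes S :: "real set"
  assumes "convex S" "s \<in> S"
  shows "eventually (\<lambda>t. t \<in> S) (at_right s) \<or> eventually (\<lambda>t. t \<notin> S) (at_right s)"
proof (cases "\<exists>b>s. b \<in> S")
  case True
  then obtain b where b: "s < b" "b \<in> S" by blast
  show ?thesis using convex_eventually_at_right_mem[OF assms(1) assms(2) b(2) b(1)] by (rule disjI1)
next
  case False
  have "eventually (\<lambda>t. t \<in> {s<..<s + 1}) (at_right s)" by (rule eventually_at_right_real) simp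
  then have "eventually (\<lambda>t. t \<notin> S) (at_right s)" by (rule eventually_mono) (use False in auto)
  then show ?thesis by (rule disjI2)
qed


abbreviation direct_rel ::
    "nat \<Rightarrow> (nat \<Rightarrow> real) \<Rightarrow> (nat \<Rightarrow> nat \<Rightarrow> point) \<Rightarrow> real \<Rightarrow> real \<Rightarrow> (nat \<times> nat) set"
  where "direct_rel n T P \<epsilon> t \<equiv> {(x, y). x < n \<and> y < n \<and> directly_connected T P \<epsilon> x y t}"

lemma directly_connected_refl: "0 \<le> \<epsilon> \<Longrightarrow> directly_connected T P \<epsilon> x x t"
  by (simp add: directly_connected_def)

lemma directly_connected_sym: "directly_connected T P \<epsilon> x y t \<longleftrightarrow> directly_connected T P \<epsilon> y x t"
  by (simp add: directly_connected_def dist_commute)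

lemma sym_direct_rel: "sym (direct_rel n T P \<epsilon> t)"
  using directly_connected_sym by (auto intro: symI)

lemma finite_direct_rel: "finite (direct_rel n T P \<epsilon> t)"
  by (rule finite_subset[of _ "{..<n} \<times> {..<n}"]) auto

lemma components_eq_quotient: "components n T P \<epsilon> t = {..<n} // (direct_rel n T P \<epsilon> t)\<^sup>*"
  by (simp add: components_def conn_rel_def)

lemma finite_card_components: "finite (components n T P \<epsilon> t) \<and> card (components n T P \<epsilon> t) \<le> n"
proof -
  have "components n T P \<epsilon> t = (\<lambda>x. (direct_rel n T P \<epsilon> t)\<^sup>* `` {x}) ` {..<n}"
    by (simp add: components_eq_quotient quotient_def UNION_singleton_eq_range)
  then show ?thesis using card_image_le[of "{..<n}"] by simp
qed

lemma component_subset: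
  assumes "A \<in> components n T P \<epsilon> t"
  shows "A \<subseteq> {..<n}"
proof
  fix y assume y: "y \<in> A"
  obtain x where x: "x < n" "A = (direct_rel n T P \<epsilon> t)\<^sup>* `` {x}"
    using assms unfolding components_eq_quotient by (rule quotientE) simp
  have "(x, y) \<in> (direct_rel n T P \<epsilon> t)\<^sup>*" using x(2) y by simp
  then show "y \<in> {..<n}"
    by (induction rule: rtrancl_induct) (simp_all add: x(1))
qed

lemma component_eqI:
  "A \<in> components n T P \<epsilon> t \<Longrightarrow> B \<in> components n T P \<epsilon> t \<Longrightarrow> a \<in> A \<Longrightarrow> a \<in> B \<Longrightarrow> A = B"
  unfolding components_eq_quotient by (rule quotient_rtrancl_eqI[OF sym_direct_rel])

lemma component_subset_eq:
  "A \<in> components n T P \<epsilon> t \<Longrightarrow> C \<in> components n T P \<epsilon> t \<Longrightarrow> A \<subseteq> C \<Longrightarrow> A = C"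
  unfolding components_eq_quotient by (rule quotient_rtrancl_subset_eq[OF sym_direct_rel sym_direct_rel])

lemma component_closed:
  assumes "C \<in> components n T P \<epsilon> t" "x \<in> C" "y < n" "directly_connected T P \<epsilon> x y t"
  shows "y \<in> C"
proof -
  have "x < n" using component_subset[OF assms(1)] assms(2) by auto
  then show ?thesis
    using quotient_rtrancl_eq_Image[OF sym_direct_rel assms(1)[unfolded components_eq_quotient] assms(2)] assms
    by auto
qed

lemma no_component_is_union_of_two:
  assumes "A \<in> components n T P \<epsilon> t" "B \<in> components n T P \<epsilon> t" "C \<in> components n T P \<epsilon> t"
    and "A \<noteq> B" "A \<union> B = C"
  shows False
  using component_subset_eq[OF assms(1,3)] component_subset_eq[OF assms(2,3)] assms(4,5) by auto

lemma sample_times_mono: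
  fixes T :: "nat \<Rightarrow> real"
  assumes inc: "\<forall>i<\<tau>. T i < T (Suc i)" and "a \<le> b" "b \<le> \<tau>"
  shows "T a \<le> T b"
  using assms(2,3)
proof (induction b rule: dec_induct)
  case (step k)
  then show ?case using inc by (meson Suc_le_lessD less_imp_le order_trans)
qed simp

lemma seg_eqI:
  assumes inc: "\<forall>i<\<tau>. T i < T (Suc i)" and "i < \<tau>" "T i < t" "t \<le> T (Suc i)"
  shows "seg T t = i"
  unfolding seg_def
proof (rule Least_equality)
  fix j assume j: "t \<le> T (Suc j)"
  show "i \<le> j"
  proof (rule ccontr)
    assume "\<not> i \<le> j"
    then have "T (Suc j) \<le> T i" using sample_times_mono[OF inc, of "Suc j" i] assms by simp
    then show False using j assms by simp
  qed
qed (rule assms(4))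

lemma pos_on_segment:
  assumes inc: "\<forall>i<\<tau>. T i < T (Suc i)" and "i < \<tau>" "T i \<le> t" "t \<le> T (Suc i)"
  shows "pos T P x t = P x i + ((t - T i) / (T (Suc i) - T i)) *\<^sub>R (P x (Suc i) - P x i)"
proof (cases "T i < t")
  case True
  then show ?thesis using seg_eqI[OF inc assms(2) True assms(4)] by (simp add: pos_def)
next
  case False
  then have t: "t = T i" using assms by simp
  show ?thesis
  proof (cases i)
    case 0
    have "seg T t = 0" unfolding seg_def using t 0 assms by (intro Least_equality) auto
    then show ?thesis using t 0 by (simp add: pos_def)
  next
    case (Suc j)
    \<comment> \<open>\<open>seg\<close> assigns the sample time to the preceding edge, which ends at the same position\<close>
    have "seg T t = j" using seg_eqI[OF inc, of j t] Suc assms t by simp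
    moreover have "T j < T (Suc j)" using inc Suc assms(2) by simp
    ultimately show ?thesis using t Suc by (simp add: pos_def)
  qed
qed

lemma segment_left_of:
  fixes T :: "nat \<Rightarrow> real"
  assumes "\<forall>i<\<tau>. T i < T (Suc i)" "T 0 < s" "s \<le> T \<tau>"
  shows "\<exists>i<\<tau>. T i < s \<and> s \<le> T (Suc i)"
  using assms
proof (induction \<tau>)
  case (Suc k)
  show ?case
  proof (cases "s \<le> T k")
    case True
    then obtain i where "i < k" "T i < s" "s \<le> T (Suc i)" using Suc by auto
    then show ?thesis using less_SucI by blast
  next
    case False
    then show ?thesis using Suc.prems by (intro exI[of _ k]) auto
  qed
qed simp

lemma segment_right_of:
  fixes T :: "nat \<Rightarrow> real"
  assumes "\<forall>i<\<tau>. T i < T (Suc i)" "T 0 \<le> s" "s < T \<tau>"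
  shows "\<exists>i<\<tau>. T i \<le> s \<and> s < T (Suc i)"
  using assms
proof (induction \<tau>)
  case (Suc k)
  show ?case
  proof (cases "s < T k")
    case True
    then obtain i where "i < k" "T i \<le> s" "s < T (Suc i)" using Suc by auto
    then show ?thesis using less_SucI by blast
  next
    case False
    then show ?thesis using Suc.prems by (intro exI[of _ k]) auto
  qed
qed simp

lemma pos_convex_combination:
  assumes inc: "\<forall>i<\<tau>. T i < T (Suc i)" and i: "i < \<tau>"
    and t: "t1 \<in> {T i..T (Suc i)}" "t2 \<in> {T i..T (Suc i)}" and uv: "0 \<le> u" "0 \<le> v" "u + v = 1"
  shows "pos T P x (u * t1 + v * t2) = u *\<^sub>R pos T P x t1 + v *\<^sub>R pos T P x t2"
proof -
  define r where "r t = (t - T i) / (T (Suc i) - T i)" for t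
  define \<Delta> where "\<Delta> = P x (Suc i) - P x i"
  have "u *\<^sub>R t1 + v *\<^sub>R t2 \<in> {T i..T (Suc i)}"
    using convexD[OF convex_real_interval(5) t uv] .
  then have "pos T P x (u * t1 + v * t2) = P x i + r (u * t1 + v * t2) *\<^sub>R \<Delta>"
    using pos_on_segment[OF inc i] by (simp add: r_def \<Delta>_def)
  also have "r (u * t1 + v * t2) = u * r t1 + v * r t2"
  proof -
    have "u * t1 + v * t2 - T i = u * (t1 - T i) + v * (t2 - T i)" using uv(3) by algebra
    then show ?thesis by (simp add: r_def add_divide_distrib)
  qed
  also have "P x i + (u * r t1 + v * r t2) *\<^sub>R \<Delta> = u *\<^sub>R (P x i + r t1 *\<^sub>R \<Delta>) + v *\<^sub>R (P x i + r t2 *\<^sub>R \<Delta>)"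
    using uv(3) by (simp add: algebra_simps flip: scaleR_add_left)
  also have "\<dots> = u *\<^sub>R pos T P x t1 + v *\<^sub>R pos T P x t2"
    using pos_on_segment[OF inc i] t by (simp add: r_def \<Delta>_def)
  finally show ?thesis .
qed

lemma convex_directly_connected_on_segment:
  assumes inc: "\<forall>i<\<tau>. T i < T (Suc i)" and i: "i < \<tau>"
  shows "convex {t \<in> {T i..T (Suc i)}. directly_connected T P \<epsilon> x y t}"
proof (rule convexI)
  fix t1 t2 u v :: real
  assume t1: "t1 \<in> {t \<in> {T i..T (Suc i)}. directly_connected T P \<epsilon> x y t}"
    and t2: "t2 \<in> {t \<in> {T i..T (Suc i)}. directly_connected T P \<epsilon> x y t}"
    and uv: "0 \<le> u" "0 \<le> v" "u + v = 1"
  let ?d = "\<lambda>t. pos T P x t - pos T P y t"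
  have t12: "t1 \<in> {T i..T (Suc i)}" "t2 \<in> {T i..T (Suc i)}" using t1 t2 by auto
  have "?d (u * t1 + v * t2) = u *\<^sub>R ?d t1 + v *\<^sub>R ?d t2"
    using pos_convex_combination[OF inc i t12 uv] by (simp add: algebra_simps)
  then have "norm (?d (u * t1 + v * t2)) \<le> u * norm (?d t1) + v * norm (?d t2)"
    using norm_triangle_ineq[of "u *\<^sub>R ?d t1" "v *\<^sub>R ?d t2"] uv by simp
  also have "\<dots> \<le> u * (2 * \<epsilon>) + v * (2 * \<epsilon>)"
    using t1 t2 uv by (intro add_mono mult_left_mono) (auto simp: directly_connected_def dist_norm)
  also have "\<dots> = 2 * \<epsilon>" using uv(3) by algebra
  finally have "directly_connected T P \<epsilon> x y (u * t1 + v * t2)"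
    by (simp add: directly_connected_def dist_norm)
  moreover have "u *\<^sub>R t1 + v *\<^sub>R t2 \<in> {T i..T (Suc i)}"
    using convexD[OF convex_real_interval(5) t12 uv] .
  ultimately show "u *\<^sub>R t1 + v *\<^sub>R t2 \<in> {t \<in> {T i..T (Suc i)}. directly_connected T P \<epsilon> x y t}"
    by simp
qed

lemma directly_connected_eventually_at_left_cases:
  assumes inc: "\<forall>i<\<tau>. T i < T (Suc i)" and s: "T 0 < s" "s \<le> T \<tau>"
    and dc: "directly_connected T P \<epsilon> x y s"
  shows "eventually (\<lambda>t. directly_connected T P \<epsilon> x y t) (at_left s) \<or>
         eventually (\<lambda>t. \<not> directly_connected T P \<epsilon> x y t) (at_left s)"
proof -
  obtain i where i: "i < \<tau>" "T i < s" "s \<le> T (Suc i)" using segment_left_of[OF inc s] by blast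
  let ?S = "{t \<in> {T i..T (Suc i)}. directly_connected T P \<epsilon> x y t}"
  have seg: "eventually (\<lambda>t. t \<in> {T i..T (Suc i)}) (at_left s)"
    using eventually_at_left_real[OF i(2)] by (rule eventually_mono) (use i in auto)
  have "eventually (\<lambda>t. t \<in> ?S) (at_left s) \<or> eventually (\<lambda>t. t \<notin> ?S) (at_left s)"
    using convex_eventually_at_left_cases[OF convex_directly_connected_on_segment[OF inc i(1)]] i dc
    by simp
  then show ?thesis
  proof
    assume "eventually (\<lambda>t. t \<in> ?S) (at_left s)"
    then show ?thesis by (rule disjI1[OF eventually_mono]) simp
  next
    assume "eventually (\<lambda>t. t \<notin> ?S) (at_left s)"
    with seg have "eventually (\<lambda>t. t \<in> {T i..T (Suc i)} \<and> t \<notin> ?S) (at_left s)"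
      by (rule eventually_conj)
    then show ?thesis by (rule disjI2[OF eventually_mono]) simp
  qed
qed

lemma directly_connected_eventually_at_right_cases:
  assumes inc: "\<forall>i<\<tau>. T i < T (Suc i)" and s: "T 0 \<le> s" "s < T \<tau>"
    and dc: "directly_connected T P \<epsilon> x y s"
  shows "eventually (\<lambda>t. directly_connected T P \<epsilon> x y t) (at_right s) \<or>
         eventually (\<lambda>t. \<not> directly_connected T P \<epsilon> x y t) (at_right s)"
proof -
  obtain i where i: "i < \<tau>" "T i \<le> s" "s < T (Suc i)" using segment_right_of[OF inc s] by blast
  let ?S = "{t \<in> {T i..T (Suc i)}. directly_connected T P \<epsilon> x y t}"
  have seg: "eventually (\<lambda>t. t \<in> {T i..T (Suc i)}) (at_right s)"
    using eventually_at_right_real[OF i(3)] by (rule eventually_mono) (use i in auto)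
  have "eventually (\<lambda>t. t \<in> ?S) (at_right s) \<or> eventually (\<lambda>t. t \<notin> ?S) (at_right s)"
    using convex_eventually_at_right_cases[OF convex_directly_connected_on_segment[OF inc i(1)]] i dc
    by simp
  then show ?thesis
  proof
    assume "eventually (\<lambda>t. t \<in> ?S) (at_right s)"
    then show ?thesis by (rule disjI1[OF eventually_mono]) simp
  next
    assume "eventually (\<lambda>t. t \<notin> ?S) (at_right s)"
    with seg have "eventually (\<lambda>t. t \<in> {T i..T (Suc i)} \<and> t \<notin> ?S) (at_right s)"
      by (rule eventually_conj)
    then show ?thesis by (rule disjI2[OF eventually_mono]) simp
  qed
qed

lemma becomes_connected_iff:
  "becomes_connected \<tau> T P \<epsilon> x y s \<longleftrightarrow> T 0 < s \<and> s \<le> T \<tau> \<and> directly_connected T P \<epsilon> x y s \<and>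
     eventually (\<lambda>t. \<not> directly_connected T P \<epsilon> x y t) (at_left s)"
proof -
  have "(\<exists>\<delta>>0. \<forall>t\<in>{s - \<delta><..<s}. Q t) \<longleftrightarrow> eventually Q (at_left s)" for Q
    unfolding eventually_at_left_field
  proof
    assume "\<exists>\<delta>>0. \<forall>t\<in>{s - \<delta><..<s}. Q t"
    then obtain \<delta> where "\<delta> > 0" "\<forall>t\<in>{s - \<delta><..<s}. Q t" by blast
    then show "\<exists>b<s. \<forall>y>b. y < s \<longrightarrow> Q y" by (intro exI[of _ "s - \<delta>"]) auto
  next
    assume "\<exists>b<s. \<forall>y>b. y < s \<longrightarrow> Q y"
    then obtain b where "b < s" "\<forall>y>b. y < s \<longrightarrow> Q y" by blast
    then show "\<exists>\<delta>>0. \<forall>t\<in>{s - \<delta><..<s}. Q t" by (intro exI[of _ "s - b"]) auto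
  qed
  then show ?thesis by (simp add: becomes_connected_def)
qed

lemma becomes_disconnected_iff:
  "becomes_disconnected \<tau> T P \<epsilon> x y s \<longleftrightarrow> T 0 \<le> s \<and> s < T \<tau> \<and> directly_connected T P \<epsilon> x y s \<and>
     eventually (\<lambda>t. \<not> directly_connected T P \<epsilon> x y t) (at_right s)"
proof -
  have "(\<exists>\<delta>>0. \<forall>t\<in>{s<..<s + \<delta>}. Q t) \<longleftrightarrow> eventually Q (at_right s)" for Q
    unfolding eventually_at_right_field
  proof
    assume "\<exists>\<delta>>0. \<forall>t\<in>{s<..<s + \<delta>}. Q t"
    then obtain \<delta> where "\<delta> > 0" "\<forall>t\<in>{s<..<s + \<delta>}. Q t" by blast
    then show "\<exists>b>s. \<forall>y>s. y < b \<longrightarrow> Q y" by (intro exI[of _ "s + \<delta>"]) auto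
  next
    assume "\<exists>b>s. \<forall>y>s. y < b \<longrightarrow> Q y"
    then obtain b where "s < b" "\<forall>y>s. y < b \<longrightarrow> Q y" by blast
    then show "\<exists>\<delta>>0. \<forall>t\<in>{s<..<s + \<delta>}. Q t" by (intro exI[of _ "b - s"]) auto
  qed
  then show ?thesis by (simp add: becomes_disconnected_def)
qed

lemma becomes_connected_unique_on_segment:
  assumes inc: "\<forall>i<\<tau>. T i < T (Suc i)" and i: "i < \<tau>"
    and ab: "a \<in> {T i..T (Suc i)}" "b \<in> {T i..T (Suc i)}"
    and ev: "becomes_connected \<tau> T P \<epsilon> x y a" "becomes_connected \<tau> T P \<epsilon> x y b"
  shows "a = b"
proof -
  let ?S = "{t \<in> {T i..T (Suc i)}. directly_connected T P \<epsilon> x y t}"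
  have S: "a \<in> ?S" "b \<in> ?S" using ab ev by (auto simp: becomes_connected_iff)
  have no_later: False if "s < s'" "s \<in> ?S" "s' \<in> ?S" "becomes_connected \<tau> T P \<epsilon> x y s'" for s s'
  proof -
    have "eventually (\<lambda>t. t \<in> ?S) (at_left s')"
      using convex_eventually_at_left_mem[OF convex_directly_connected_on_segment[OF inc i] that(2,3,1)] .
    moreover have "eventually (\<lambda>t. \<not> directly_connected T P \<epsilon> x y t) (at_left s')"
      using that(4) by (simp add: becomes_connected_iff)
    ultimately have "eventually (\<lambda>t. False) (at_left s')" by (rule eventually_elim2) simp
    then show False by simp
  qed
  show ?thesis
  proof (rule ccontr)
    assume "a \<noteq> b"
    then consider "a < b" | "b < a" by linarith
    then show False using no_later[OF _ S ev(2)] no_later[OF _ S(2,1) ev(1)] by cases blast+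
  qed
qed

lemma becomes_disconnected_unique_on_segment:
  assumes inc: "\<forall>i<\<tau>. T i < T (Suc i)" and i: "i < \<tau>"
    and ab: "a \<in> {T i..T (Suc i)}" "b \<in> {T i..T (Suc i)}"
    and ev: "becomes_disconnected \<tau> T P \<epsilon> x y a" "becomes_disconnected \<tau> T P \<epsilon> x y b"
  shows "a = b"
proof -
  let ?S = "{t \<in> {T i..T (Suc i)}. directly_connected T P \<epsilon> x y t}"
  have S: "a \<in> ?S" "b \<in> ?S" using ab ev by (auto simp: becomes_disconnected_iff)
  have no_later: False if "s < s'" "s \<in> ?S" "s' \<in> ?S" "becomes_disconnected \<tau> T P \<epsilon> x y s" for s s'
  proof -
    have "eventually (\<lambda>t. t \<in> ?S) (at_right s)"
      using convex_eventually_at_right_mem[OF convex_directly_connected_on_segment[OF inc i] that(2,3,1)] .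
    moreover have "eventually (\<lambda>t. \<not> directly_connected T P \<epsilon> x y t) (at_right s)"
      using that(4) by (simp add: becomes_disconnected_iff)
    ultimately have "eventually (\<lambda>t. False) (at_right s)" by (rule eventually_elim2) simp
    then show False by simp
  qed
  show ?thesis
  proof (rule ccontr)
    assume "a \<noteq> b"
    then consider "a < b" | "b < a" by linarith
    then show False using no_later[OF _ S ev(1)] no_later[OF _ S(2,1) ev(2)] by cases blast+
  qed
qed

lemma finite_card_pair_event_times:
  assumes inc: "\<forall>i<\<tau>. T i < T (Suc i)"
  shows "finite {s. pair_event n \<tau> T P \<epsilon> x y s b} \<and> card {s. pair_event n \<tau> T P \<epsilon> x y s b} \<le> \<tau>"
proof (rule finite_card_le_if_one_per_piece[where I = "\<lambda>i. {T i..T (Suc i)}"])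
  show "{s. pair_event n \<tau> T P \<epsilon> x y s b} \<subseteq> (\<Union>i<\<tau>. {T i..T (Suc i)})"
  proof
    fix s assume "s \<in> {s. pair_event n \<tau> T P \<epsilon> x y s b}"
    then have "(T 0 < s \<and> s \<le> T \<tau>) \<or> (T 0 \<le> s \<and> s < T \<tau>)"
      by (cases b) (simp_all add: pair_event_def becomes_connected_def becomes_disconnected_def)
    then obtain i where "i < \<tau>" "T i \<le> s" "s \<le> T (Suc i)"
    proof
      assume "T 0 < s \<and> s \<le> T \<tau>"
      then show ?thesis using segment_left_of[OF inc] that by (meson less_imp_le)
    next
      assume "T 0 \<le> s \<and> s < T \<tau>"
      then show ?thesis using segment_right_of[OF inc] that by (meson less_imp_le)
    qed
    then show "s \<in> (\<Union>i<\<tau>. {T i..T (Suc i)})" by auto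
  qed
next
  fix i s s'
  assume "i < \<tau>" "s \<in> {s. pair_event n \<tau> T P \<epsilon> x y s b} \<inter> {T i..T (Suc i)}"
    "s' \<in> {s. pair_event n \<tau> T P \<epsilon> x y s b} \<inter> {T i..T (Suc i)}"
  then show "s = s'"
    using becomes_connected_unique_on_segment[OF inc] becomes_disconnected_unique_on_segment[OF inc]
    by (cases b) (auto simp: pair_event_def)
qed

lemma finite_card_event_times:
  assumes inc: "\<forall>i<\<tau>. T i < T (Suc i)"
  shows "finite {s. \<exists>x y. pair_event n \<tau> T P \<epsilon> x y s b} \<and>
         card {s. \<exists>x y. pair_event n \<tau> T P \<epsilon> x y s b} \<le> n * n * \<tau>"
proof -
  let ?I = "{..<n} \<times> {..<n}" and ?E = "\<lambda>p. {s. pair_event n \<tau> T P \<epsilon> (fst p) (snd p) s b}"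
  have eq: "{s. \<exists>x y. pair_event n \<tau> T P \<epsilon> x y s b} = (\<Union>p\<in>?I. ?E p)"
    by (auto simp: pair_event_def)
  have E: "finite (?E p)" "card (?E p) \<le> \<tau>" for p
    using finite_card_pair_event_times[OF inc] by auto
  have "card (\<Union>p\<in>?I. ?E p) \<le> (\<Sum>p\<in>?I. card (?E p))" by (rule card_UN_le) simp
  also have "\<dots> \<le> card ?I * \<tau>" using sum_bounded_above[of ?I "\<lambda>p. card (?E p)" \<tau>] E(2) by simp
  finally show ?thesis unfolding eq using E(1) by simp
qed

section \<open>Merge and split vertices\<close>

lemma component_split_loses_direct_connection:
  assumes F: "F \<noteq> bot" and C: "C \<in> components n T P \<epsilon> s" and AB: "A \<noteq> B" "A \<union> B = C"
    and ev: "eventually (\<lambda>t. A \<in> components n T P \<epsilon> t \<and> B \<in> components n T P \<epsilon> t) F"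
  shows "\<exists>x\<in>C. \<exists>y<n. directly_connected T P \<epsilon> x y s \<and>
           \<not> eventually (\<lambda>t. directly_connected T P \<epsilon> x y t) F"
proof (rule ccontr)
  assume "\<not> ?thesis"
  then have kept: "eventually (\<lambda>t. directly_connected T P \<epsilon> x y t) F"
    if "x \<in> C" "y < n" "directly_connected T P \<epsilon> x y s" for x y
    using that by blast
  let ?Q = "{p \<in> direct_rel n T P \<epsilon> s. fst p \<in> C}"
  have "finite ?Q" by (rule finite_subset[OF _ finite_direct_rel]) auto
  moreover have "\<forall>p\<in>?Q. eventually (\<lambda>t. p \<in> direct_rel n T P \<epsilon> t) F"
  proof
    fix p assume "p \<in> ?Q"
    then obtain x y where "p = (x, y)" "x \<in> C" "x < n" "y < n" "directly_connected T P \<epsilon> x y s"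
      by auto
    then show "eventually (\<lambda>t. p \<in> direct_rel n T P \<epsilon> t) F"
      using kept[of x y] by (auto elim: eventually_mono)
  qed
  ultimately have "eventually (\<lambda>t. \<forall>p\<in>?Q. p \<in> direct_rel n T P \<epsilon> t) F"
    by (rule eventually_ball_finite)
  then obtain t where t: "\<forall>p\<in>?Q. p \<in> direct_rel n T P \<epsilon> t"
    "A \<in> components n T P \<epsilon> t" "B \<in> components n T P \<epsilon> t"
    using eventually_happens'[OF F eventually_conj[OF _ ev]] by blast
  have "D = C" if D: "D \<in> components n T P \<epsilon> t" "D \<subseteq> C" for D
  proof (rule quotient_rtrancl_subset_eq[OF sym_direct_rel sym_direct_rel])
    show "C \<in> {..<n} // (direct_rel n T P \<epsilon> s)\<^sup>*" using C by (simp add: components_eq_quotient)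
    show "D \<in> {..<n} // (direct_rel n T P \<epsilon> t)\<^sup>*" using D(1) by (simp add: components_eq_quotient)
    show "D \<subseteq> C" by (rule D(2))
    fix z w assume "z \<in> C" "(z, w) \<in> direct_rel n T P \<epsilon> s"
    then show "(z, w) \<in> direct_rel n T P \<epsilon> t" using t(1) by auto
  qed
  then have "A = C" "B = C" using t(2,3) AB(2) by auto
  with AB(1) show False by simp
qed

lemma comp_on_eventually_at_left:
  assumes "\<delta> > 0" "comp_on n T P \<epsilon> A {s - \<delta><..<s}"
  shows "eventually (\<lambda>t. A \<in> components n T P \<epsilon> t) (at_left s)"
proof -
  have "eventually (\<lambda>t. t \<in> {s - \<delta><..<s}) (at_left s)"
    using assms(1) by (intro eventually_at_left_real) simp
  then show ?thesis by (rule eventually_mono) (use assms(2) in \<open>simp add: comp_on_def\<close>)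
qed

lemma comp_on_eventually_at_right:
  assumes "\<delta> > 0" "comp_on n T P \<epsilon> A {s<..<s + \<delta>}"
  shows "eventually (\<lambda>t. A \<in> components n T P \<epsilon> t) (at_right s)"
proof -
  have "eventually (\<lambda>t. t \<in> {s<..<s + \<delta>}) (at_right s)"
    using assms(1) by (intro eventually_at_right_real) simp
  then show ?thesis by (rule eventually_mono) (use assms(2) in \<open>simp add: comp_on_def\<close>)
qed

lemma merge_has_connection_event:
  assumes inc: "\<forall>i<\<tau>. T i < T (Suc i)" and \<epsilon>: "0 \<le> \<epsilon>" and merge: "is_merge n \<tau> T P \<epsilon> s C"
  obtains x y where "x \<in> C" "pair_event n \<tau> T P \<epsilon> x y s True"
proof -
  obtain A B \<delta> where s: "T 0 < s" "s \<le> T \<tau>" and C: "C \<in> components n T P \<epsilon> s"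
    and AB: "A \<noteq> B" "A \<union> B = C" "\<delta> > 0"
      "comp_on n T P \<epsilon> A {s - \<delta><..<s}" "comp_on n T P \<epsilon> B {s - \<delta><..<s}"
    using merge unfolding is_merge_def by blast
  have ev: "eventually (\<lambda>t. A \<in> components n T P \<epsilon> t \<and> B \<in> components n T P \<epsilon> t) (at_left s)"
    using comp_on_eventually_at_left[OF AB(3,4)] comp_on_eventually_at_left[OF AB(3,5)]
    by (rule eventually_conj)
  obtain x y where xy: "x \<in> C" "y < n" "directly_connected T P \<epsilon> x y s"
    "\<not> eventually (\<lambda>t. directly_connected T P \<epsilon> x y t) (at_left s)"
    using component_split_loses_direct_connection[OF trivial_limit_at_left_real C AB(1,2) ev] by blast
  have "x \<noteq> y" using xy(4) directly_connected_refl[OF \<epsilon>] by auto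
  moreover have "x < n" using component_subset[OF C] xy(1) by auto
  moreover have "becomes_connected \<tau> T P \<epsilon> x y s"
    using directly_connected_eventually_at_left_cases[OF inc s xy(3)] xy(4) s xy(3)
    by (simp add: becomes_connected_iff)
  ultimately show ?thesis using that xy(1,2) by (simp add: pair_event_def)
qed

lemma split_has_disconnection_event:
  assumes inc: "\<forall>i<\<tau>. T i < T (Suc i)" and \<epsilon>: "0 \<le> \<epsilon>" and split: "is_split n \<tau> T P \<epsilon> s C"
  obtains x y where "x \<in> C" "pair_event n \<tau> T P \<epsilon> x y s False"
proof -
  obtain A B \<delta> where s: "T 0 \<le> s" "s < T \<tau>" and C: "C \<in> components n T P \<epsilon> s"
    and AB: "A \<noteq> B" "A \<union> B = C" "\<delta> > 0"
      "comp_on n T P \<epsilon> A {s<..<s + \<delta>}" "comp_on n T P \<epsilon> B {s<..<s + \<delta>}"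
    using split unfolding is_split_def by blast
  have ev: "eventually (\<lambda>t. A \<in> components n T P \<epsilon> t \<and> B \<in> components n T P \<epsilon> t) (at_right s)"
    using comp_on_eventually_at_right[OF AB(3,4)] comp_on_eventually_at_right[OF AB(3,5)]
    by (rule eventually_conj)
  obtain x y where xy: "x \<in> C" "y < n" "directly_connected T P \<epsilon> x y s"
    "\<not> eventually (\<lambda>t. directly_connected T P \<epsilon> x y t) (at_right s)"
    using component_split_loses_direct_connection[OF trivial_limit_at_right_real C AB(1,2) ev] by blast
  have "x \<noteq> y" using xy(4) directly_connected_refl[OF \<epsilon>] by auto
  moreover have "x < n" using component_subset[OF C] xy(1) by auto
  moreover have "becomes_disconnected \<tau> T P \<epsilon> x y s"
    using directly_connected_eventually_at_right_cases[OF inc s xy(3)] xy(4) s xy(3)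
    by (simp add: becomes_disconnected_iff)
  ultimately show ?thesis using that xy(1,2) by (simp add: pair_event_def)
qed

lemma pair_event_directly_connected:
  "pair_event n \<tau> T P \<epsilon> x y s b \<Longrightarrow> x < n \<and> y < n \<and> directly_connected T P \<epsilon> x y s"
  by (cases b) (simp_all add: pair_event_def becomes_connected_def becomes_disconnected_def)

lemma components_eq_if_event_pairs:
  assumes gp: "general_position n \<tau> T P \<epsilon>"
    and ev: "pair_event n \<tau> T P \<epsilon> x y s b" "pair_event n \<tau> T P \<epsilon> x' y' s b'"
    and C: "C \<in> components n T P \<epsilon> s" "C' \<in> components n T P \<epsilon> s" and x: "x \<in> C" "x' \<in> C'"
  shows "C = C'"
proof -
  have "{x, y} = {x', y'}" using gp ev unfolding general_position_def by blast
  moreover have "y' \<in> C'"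
    using component_closed[OF C(2) x(2)] pair_event_directly_connected[OF ev(2)] by blast
  ultimately have "x \<in> C'" using x(2) by auto
  then show ?thesis using component_eqI[OF C x(1)] by blast
qed

lemma merge_unique:
  assumes v: "valid_input n \<tau> T P \<epsilon>" and "is_merge n \<tau> T P \<epsilon> s C" "is_merge n \<tau> T P \<epsilon> s C'"
  shows "C = C'"
proof -
  have inc: "\<forall>i<\<tau>. T i < T (Suc i)" and \<epsilon>: "0 \<le> \<epsilon>" using v by (simp_all add: valid_input_def)
  obtain x y where "x \<in> C" "pair_event n \<tau> T P \<epsilon> x y s True"
    using merge_has_connection_event[OF inc \<epsilon> assms(2)] .
  moreover obtain x' y' where "x' \<in> C'" "pair_event n \<tau> T P \<epsilon> x' y' s True"
    using merge_has_connection_event[OF inc \<epsilon> assms(3)] .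
  ultimately show ?thesis
    using components_eq_if_event_pairs[of n \<tau> T P \<epsilon> x y s True x' y' True C C'] v assms(2,3)
    by (simp add: valid_input_def is_merge_def)
qed

lemma split_unique:
  assumes v: "valid_input n \<tau> T P \<epsilon>" and "is_split n \<tau> T P \<epsilon> s C" "is_split n \<tau> T P \<epsilon> s C'"
  shows "C = C'"
proof -
  have inc: "\<forall>i<\<tau>. T i < T (Suc i)" and \<epsilon>: "0 \<le> \<epsilon>" using v by (simp_all add: valid_input_def)
  obtain x y where "x \<in> C" "pair_event n \<tau> T P \<epsilon> x y s False"
    using split_has_disconnection_event[OF inc \<epsilon> assms(2)] .
  moreover obtain x' y' where "x' \<in> C'" "pair_event n \<tau> T P \<epsilon> x' y' s False"
    using split_has_disconnection_event[OF inc \<epsilon> assms(3)] .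
  ultimately show ?thesis
    using components_eq_if_event_pairs[of n \<tau> T P \<epsilon> x y s False x' y' False C C'] v assms(2,3)
    by (simp add: valid_input_def is_split_def)
qed

lemma finite_card_merges:
  assumes v: "valid_input n \<tau> T P \<epsilon>"
  shows "finite {(s, C). is_merge n \<tau> T P \<epsilon> s C} \<and> card {(s, C). is_merge n \<tau> T P \<epsilon> s C} \<le> n * n * \<tau>"
proof -
  have inc: "\<forall>i<\<tau>. T i < T (Suc i)" and \<epsilon>: "0 \<le> \<epsilon>" using v by (simp_all add: valid_input_def)
  let ?S = "{s. \<exists>x y. pair_event n \<tau> T P \<epsilon> x y s True}"
  have "finite {(s, C). is_merge n \<tau> T P \<epsilon> s C} \<and> card {(s, C). is_merge n \<tau> T P \<epsilon> s C} \<le> card ?S"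
  proof (rule finite_card_le_if_unique_per_time)
    show "\<And>s C C'. is_merge n \<tau> T P \<epsilon> s C \<Longrightarrow> is_merge n \<tau> T P \<epsilon> s C' \<Longrightarrow> C = C'"
      by (rule merge_unique[OF v])
    show "\<And>s C. is_merge n \<tau> T P \<epsilon> s C \<Longrightarrow> s \<in> ?S"
      using merge_has_connection_event[OF inc \<epsilon>] by blast
    show "finite ?S" using finite_card_event_times[OF inc] by blast
  qed
  then show ?thesis using finite_card_event_times[OF inc, of n P \<epsilon> True] by linarith
qed

lemma finite_card_splits:
  assumes v: "valid_input n \<tau> T P \<epsilon>"
  shows "finite {(s, C). is_split n \<tau> T P \<epsilon> s C} \<and> card {(s, C). is_split n \<tau> T P \<epsilon> s C} \<le> n * n * \<tau>"
proof -
  have inc: "\<forall>i<\<tau>. T i < T (Suc i)" and \<epsilon>: "0 \<le> \<epsilon>" using v by (simp_all add: valid_input_def)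
  let ?S = "{s. \<exists>x y. pair_event n \<tau> T P \<epsilon> x y s False}"
  have "finite {(s, C). is_split n \<tau> T P \<epsilon> s C} \<and> card {(s, C). is_split n \<tau> T P \<epsilon> s C} \<le> card ?S"
  proof (rule finite_card_le_if_unique_per_time)
    show "\<And>s C C'. is_split n \<tau> T P \<epsilon> s C \<Longrightarrow> is_split n \<tau> T P \<epsilon> s C' \<Longrightarrow> C = C'"
      by (rule split_unique[OF v])
    show "\<And>s C. is_split n \<tau> T P \<epsilon> s C \<Longrightarrow> s \<in> ?S"
      using split_has_disconnection_event[OF inc \<epsilon>] by blast
    show "finite ?S" using finite_card_event_times[OF inc] by blast
  qed
  then show ?thesis using finite_card_event_times[OF inc, of n P \<epsilon> False] by linarith
qed

lemma reeb_vertices_eq: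
  "reeb_vertices n \<tau> T P \<epsilon> =
     (\<lambda>C. (T 0, C, StartV)) ` components n T P \<epsilon> (T 0) \<union>
     (\<lambda>C. (T \<tau>, C, EndV)) ` components n T P \<epsilon> (T \<tau>) \<union>
     (\<lambda>(s, C). (s, C, MergeV)) ` {(s, C). is_merge n \<tau> T P \<epsilon> s C} \<union>
     (\<lambda>(s, C). (s, C, SplitV)) ` {(s, C). is_split n \<tau> T P \<epsilon> s C}"
  unfolding reeb_vertices_def by auto

lemma finite_card_reeb_vertices:
  assumes v: "valid_input n \<tau> T P \<epsilon>"
  shows "finite (reeb_vertices n \<tau> T P \<epsilon>) \<and> card (reeb_vertices n \<tau> T P \<epsilon>) \<le> 4 * n * n * \<tau>"
proof -
  let ?S = "(\<lambda>C. (T 0, C, StartV)) ` components n T P \<epsilon> (T 0)"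
    and ?E = "(\<lambda>C. (T \<tau>, C, EndV)) ` components n T P \<epsilon> (T \<tau>)"
    and ?M = "(\<lambda>(s, C). (s, C, MergeV)) ` {(s, C). is_merge n \<tau> T P \<epsilon> s C}"
    and ?Sp = "(\<lambda>(s, C). (s, C, SplitV)) ` {(s, C). is_split n \<tau> T P \<epsilon> s C}"
  have S: "finite ?S" "card ?S \<le> n"
    using finite_card_components[of n T P \<epsilon> "T 0"] card_image_le order_trans by blast+
  have E: "finite ?E" "card ?E \<le> n"
    using finite_card_components[of n T P \<epsilon> "T \<tau>"] card_image_le order_trans by blast+
  have M: "finite ?M" "card ?M \<le> n * n * \<tau>"
    using finite_card_merges[OF v] card_image_le order_trans by blast+
  have Sp: "finite ?Sp" "card ?Sp \<le> n * n * \<tau>"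
    using finite_card_splits[OF v] card_image_le order_trans by blast+
  have "1 \<le> \<tau>" using v by (simp add: valid_input_def)
  have "n \<le> n * n" by (rule le_square)
  also have "\<dots> \<le> n * n * \<tau>" using \<open>1 \<le> \<tau>\<close> by (metis mult.right_neutral mult_le_mono2)
  finally have "n \<le> n * n * \<tau>" .
  moreover have "card (?S \<union> ?E \<union> ?M \<union> ?Sp) \<le> card ?S + card ?E + card ?M + card ?Sp"
    by (meson add_le_mono card_Un_le le_refl order_trans)
  ultimately have "card (?S \<union> ?E \<union> ?M \<union> ?Sp) \<le> 4 * n * n * \<tau>"
    using S(2) E(2) M(2) Sp(2) by linarith
  then show ?thesis unfolding reeb_vertices_eq using S(1) E(1) M(1) Sp(1) by blast
qed

section \<open>Edges\<close>

lemma parts_after_eqI: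
  assumes "A \<in> parts_after n T P \<epsilon> s C" "A' \<in> parts_after n T P \<epsilon> s C" "w \<in> A" "w \<in> A'"
  shows "A = A'"
proof -
  obtain \<delta> \<delta>' where "\<delta> > 0" "comp_on n T P \<epsilon> A {s<..<s + \<delta>}"
    "\<delta>' > 0" "comp_on n T P \<epsilon> A' {s<..<s + \<delta>'}"
    using assms(1,2) unfolding parts_after_def by blast
  then have "eventually (\<lambda>t. A \<in> components n T P \<epsilon> t \<and> A' \<in> components n T P \<epsilon> t) (at_right s)"
    using comp_on_eventually_at_right eventually_conj by metis
  then obtain t where "A \<in> components n T P \<epsilon> t" "A' \<in> components n T P \<epsilon> t"
    using eventually_happens'[OF trivial_limit_at_right_real] by blast
  then show ?thesis using component_eqI assms(3,4) by blast
qed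

lemma split_part_meets_event_pair:
  assumes v: "valid_input n \<tau> T P \<epsilon>" and split: "is_split n \<tau> T P \<epsilon> s C"
    and ab: "a \<in> C" "pair_event n \<tau> T P \<epsilon> a b s False"
    and A: "A \<in> parts_after n T P \<epsilon> s C"
  shows "a \<in> A \<or> b \<in> A"
proof -
  have inc: "\<forall>i<\<tau>. T i < T (Suc i)" and \<epsilon>: "0 \<le> \<epsilon>" and gp: "general_position n \<tau> T P \<epsilon>"
    using v by (simp_all add: valid_input_def)
  have s: "T 0 \<le> s" "s < T \<tau>" and C: "C \<in> components n T P \<epsilon> s"
    using split by (simp_all add: is_split_def)
  let ?r = "direct_rel n T P \<epsilon> s"
  let ?r' = "{p \<in> ?r. {fst p, snd p} \<noteq> {a, b}}"
  \<comment> \<open>by general position, every direct connection other than the event pair survives the split\<close>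
  have "\<forall>p\<in>?r'. eventually (\<lambda>t. p \<in> direct_rel n T P \<epsilon> t) (at_right s)"
  proof
    fix p assume p': "p \<in> ?r'"
    obtain x y where xy: "p = (x, y)" by (cases p)
    have p: "p = (x, y)" "x < n" "y < n" "directly_connected T P \<epsilon> x y s" "{x, y} \<noteq> {a, b}"
      using p' unfolding xy by simp_all
    have "eventually (\<lambda>t. directly_connected T P \<epsilon> x y t) (at_right s)"
    proof (cases "x = y")
      case True
      then show ?thesis using directly_connected_refl[OF \<epsilon>] by simp
    next
      case False
      have "\<not> becomes_disconnected \<tau> T P \<epsilon> x y s"
      proof
        assume "becomes_disconnected \<tau> T P \<epsilon> x y s"
        then have "pair_event n \<tau> T P \<epsilon> x y s False" using p(2,3) False by (simp add: pair_event_def)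
        then show False
          using gp[unfolded general_position_def, rule_format, of x y s False a b False] ab(2) p(5)
          by blast
      qed
      then show ?thesis
        using directly_connected_eventually_at_right_cases[OF inc s p(4)] s p(4)
        by (auto simp: becomes_disconnected_iff)
    qed
    then show "eventually (\<lambda>t. p \<in> direct_rel n T P \<epsilon> t) (at_right s)"
      using p by (auto elim: eventually_mono)
  qed
  then have kept: "eventually (\<lambda>t. \<forall>p\<in>?r'. p \<in> direct_rel n T P \<epsilon> t) (at_right s)"
    by (rule eventually_ball_finite[rotated]) (rule finite_subset[OF _ finite_direct_rel], auto)
  obtain \<delta> where "A \<subseteq> C" "\<delta> > 0" "comp_on n T P \<epsilon> A {s<..<s + \<delta>}"
    using A unfolding parts_after_def by blast
  then obtain t where t: "\<forall>p\<in>?r'. p \<in> direct_rel n T P \<epsilon> t" "A \<in> components n T P \<epsilon> t"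
    using eventually_happens'[OF trivial_limit_at_right_real eventually_conj[OF kept
          comp_on_eventually_at_right]] by blast
  obtain z where z: "z \<in> A" using t(2) by (auto simp: components_eq_quotient quotient_def)
  have "(a, z) \<in> ?r\<^sup>*"
    using quotient_rtrancl_eq_Image[OF sym_direct_rel C[unfolded components_eq_quotient] ab(1)]
      z \<open>A \<subseteq> C\<close> by auto
  then have "(a, z) \<in> ?r'\<^sup>* \<or> (b, z) \<in> ?r'\<^sup>*" by (rule rtrancl_avoiding_pair)
  moreover have "?r' \<subseteq> direct_rel n T P \<epsilon> t"
  proof
    fix p assume "p \<in> ?r'"
    then show "p \<in> direct_rel n T P \<epsilon> t" using t(1) by blast
  qed
  then have "?r'\<^sup>* \<subseteq> (direct_rel n T P \<epsilon> t)\<^sup>*" by (rule rtrancl_mono)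
  ultimately have "(a, z) \<in> (direct_rel n T P \<epsilon> t)\<^sup>* \<or> (b, z) \<in> (direct_rel n T P \<epsilon> t)\<^sup>*" by blast
  then have "(z, a) \<in> (direct_rel n T P \<epsilon> t)\<^sup>* \<or> (z, b) \<in> (direct_rel n T P \<epsilon> t)\<^sup>*"
    using symD[OF sym_rtrancl[OF sym_direct_rel[of n T P \<epsilon> t]]] by blast
  then show ?thesis
    using quotient_rtrancl_eq_Image[OF sym_direct_rel t(2)[unfolded components_eq_quotient] z] by auto
qed

lemma finite_card_parts_after:
  assumes v: "valid_input n \<tau> T P \<epsilon>" and split: "is_split n \<tau> T P \<epsilon> s C"
  shows "finite (parts_after n T P \<epsilon> s C) \<and> card (parts_after n T P \<epsilon> s C) \<le> 2"
proof -
  have inc: "\<forall>i<\<tau>. T i < T (Suc i)" and \<epsilon>: "0 \<le> \<epsilon>" using v by (simp_all add: valid_input_def)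
  obtain a b where ab: "a \<in> C" "pair_event n \<tau> T P \<epsilon> a b s False"
    using split_has_disconnection_event[OF inc \<epsilon> split] .
  have "a \<noteq> b" using ab(2) by (simp add: pair_event_def)
  let ?f = "\<lambda>A. if a \<in> A then a else b"
  have meets: "a \<in> A \<or> b \<in> A" if "A \<in> parts_after n T P \<epsilon> s C" for A
    using split_part_meets_event_pair[OF v split ab that] .
  have inj: "inj_on ?f (parts_after n T P \<epsilon> s C)"
  proof (rule inj_onI)
    fix A A' assume A: "A \<in> parts_after n T P \<epsilon> s C" "A' \<in> parts_after n T P \<epsilon> s C" "?f A = ?f A'"
    show "A = A'"
    proof (cases "a \<in> A")
      case True
      then have "a \<in> A'" using A(3) \<open>a \<noteq> b\<close> by (auto split: if_splits)
      then show ?thesis using parts_after_eqI[OF A(1,2) True] by blast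
    next
      case False
      then have "b \<in> A" "a \<notin> A'" using meets[OF A(1)] A(3) \<open>a \<noteq> b\<close> by (auto split: if_splits)
      then have "b \<in> A'" using meets[OF A(2)] by blast
      then show ?thesis using parts_after_eqI[OF A(1,2) \<open>b \<in> A\<close>] by blast
    qed
  qed
  have sub: "?f ` parts_after n T P \<epsilon> s C \<subseteq> {a, b}" by auto
  have "finite (parts_after n T P \<epsilon> s C)"
    using finite_imageD[OF finite_subset[OF sub] inj] by simp
  moreover have "card (parts_after n T P \<epsilon> s C) \<le> card {a, b}"
    using card_inj_on_le[OF inj sub] by simp
  moreover have "card {a, b} = 2" using \<open>a \<noteq> b\<close> by simp
  ultimately show ?thesis by simp
qed

lemma finite_card_out_sets:
  assumes v: "valid_input n \<tau> T P \<epsilon>" and u: "u \<in> reeb_vertices n \<tau> T P \<epsilon>"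
  shows "finite (out_sets n T P \<epsilon> u) \<and> card (out_sets n T P \<epsilon> u) \<le> 2"
proof -
  obtain s C k where u': "u = (s, C, k)" by (cases u)
  show ?thesis
  proof (cases k)
    case SplitV
    then have "is_split n \<tau> T P \<epsilon> s C" using u u' by (auto simp: reeb_vertices_def)
    then show ?thesis using finite_card_parts_after[OF v] u' SplitV by simp
  qed (simp_all add: u')
qed

lemma reeb_vertex_time_le:
  assumes v: "valid_input n \<tau> T P \<epsilon>" and u: "u \<in> reeb_vertices n \<tau> T P \<epsilon>"
  shows "fst u \<le> T \<tau>"
proof -
  have "T 0 \<le> T \<tau>" using sample_times_mono[of \<tau> T 0 \<tau>] v by (simp add: valid_input_def)
  then show ?thesis using u by (auto simp: reeb_vertices_def is_merge_def is_split_def)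
qed

lemma merge_component_not_before:
  assumes merge: "is_merge n \<tau> T P \<epsilon> s C" and "\<delta> > 0"
  shows "\<not> comp_on n T P \<epsilon> C {s - \<delta><..<s}"
proof
  assume "comp_on n T P \<epsilon> C {s - \<delta><..<s}"
  then have evC: "eventually (\<lambda>t. C \<in> components n T P \<epsilon> t) (at_left s)"
    by (rule comp_on_eventually_at_left[OF \<open>\<delta> > 0\<close>])
  obtain A B \<delta>' where AB: "A \<noteq> B" "A \<union> B = C" "\<delta>' > 0"
    "comp_on n T P \<epsilon> A {s - \<delta>'<..<s}" "comp_on n T P \<epsilon> B {s - \<delta>'<..<s}"
    using merge unfolding is_merge_def by blast
  have "eventually (\<lambda>t. A \<in> components n T P \<epsilon> t \<and> B \<in> components n T P \<epsilon> t \<and>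
      C \<in> components n T P \<epsilon> t) (at_left s)"
    using comp_on_eventually_at_left[OF AB(3,4)] comp_on_eventually_at_left[OF AB(3,5)] evC
    by (intro eventually_conj)
  then obtain t where "A \<in> components n T P \<epsilon> t" "B \<in> components n T P \<epsilon> t" "C \<in> components n T P \<epsilon> t"
    using eventually_happens'[OF trivial_limit_at_left_real] by blast
  then show False using no_component_is_union_of_two AB(1,2) by blast
qed

lemma split_component_not_after:
  assumes split: "is_split n \<tau> T P \<epsilon> s C" and "\<delta> > 0"
  shows "\<not> comp_on n T P \<epsilon> C {s<..<s + \<delta>}"
proof
  assume "comp_on n T P \<epsilon> C {s<..<s + \<delta>}"
  then have evC: "eventually (\<lambda>t. C \<in> components n T P \<epsilon> t) (at_right s)"
    by (rule comp_on_eventually_at_right[OF \<open>\<delta> > 0\<close>])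
  obtain A B \<delta>' where AB: "A \<noteq> B" "A \<union> B = C" "\<delta>' > 0"
    "comp_on n T P \<epsilon> A {s<..<s + \<delta>'}" "comp_on n T P \<epsilon> B {s<..<s + \<delta>'}"
    using split unfolding is_split_def by blast
  have "eventually (\<lambda>t. A \<in> components n T P \<epsilon> t \<and> B \<in> components n T P \<epsilon> t \<and>
      C \<in> components n T P \<epsilon> t) (at_right s)"
    using comp_on_eventually_at_right[OF AB(3,4)] comp_on_eventually_at_right[OF AB(3,5)] evC
    by (intro eventually_conj)
  then obtain t where "A \<in> components n T P \<epsilon> t" "B \<in> components n T P \<epsilon> t" "C \<in> components n T P \<epsilon> t"
    using eventually_happens'[OF trivial_limit_at_right_real] by blast
  then show False using no_component_is_union_of_two AB(1,2) by blast
qed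

lemma merge_part_not_component:
  assumes merge: "is_merge n \<tau> T P \<epsilon> s C" and "D \<subseteq> C" "a < s" "comp_on n T P \<epsilon> D {a<..<s}"
  shows "D \<notin> components n T P \<epsilon> s"
proof
  assume "D \<in> components n T P \<epsilon> s"
  moreover have "C \<in> components n T P \<epsilon> s" using merge by (simp add: is_merge_def)
  ultimately have "D = C" using component_subset_eq \<open>D \<subseteq> C\<close> by blast
  then show False
    using merge_component_not_before[OF merge, of "s - a"] assms(3,4) by simp
qed

lemma reeb_edge_target_cases:
  assumes "(u, D, v) \<in> reeb_edges n \<tau> T P \<epsilon>"
  obtains "v = (fst v, D, EndV)" "fst v = T \<tau>" "D \<in> components n T P \<epsilon> (fst v)"
    | "v = (fst v, D, SplitV)" "is_split n \<tau> T P \<epsilon> (fst v) D"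
    | C where "v = (fst v, C, MergeV)" "is_merge n \<tau> T P \<epsilon> (fst v) C" "D \<subseteq> C"
proof -
  have V: "v \<in> reeb_vertices n \<tau> T P \<epsilon>" and D: "D \<in> in_sets n T P \<epsilon> v"
    using assms by (simp_all add: reeb_edges_def)
  obtain s C k where v: "v = (s, C, k)" by (cases v)
  show ?thesis
    using V D that by (cases k) (auto simp: v reeb_vertices_def parts_before_def)
qed

lemma reeb_edge_target_not_before:
  assumes v: "valid_input n \<tau> T P \<epsilon>"
    and e1: "(u, D, v1) \<in> reeb_edges n \<tau> T P \<epsilon>" and e2: "(u, D, v2) \<in> reeb_edges n \<tau> T P \<epsilon>"
  shows "\<not> fst v1 < fst v2"
proof
  assume lt: "fst v1 < fst v2"
  have u1: "fst u < fst v1" using e1 by (simp add: reeb_edges_def)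
  have co: "comp_on n T P \<epsilon> D {fst u<..<fst v2}" using e2 by (simp add: reeb_edges_def)
  have "fst v2 \<le> T \<tau>" using reeb_vertex_time_le[OF v] e2 by (simp add: reeb_edges_def)
  from e1 show False
  proof (cases rule: reeb_edge_target_cases)
    case 1
    then show False using lt \<open>fst v2 \<le> T \<tau>\<close> by simp
  next
    case 2
    have "comp_on n T P \<epsilon> D {fst v1<..<fst v2}" using co u1 by (auto simp: comp_on_def)
    then show False using split_component_not_after[OF 2(2), of "fst v2 - fst v1"] lt by simp
  next
    case (3 C)
    have "D \<in> components n T P \<epsilon> (fst v1)" using co u1 lt by (simp add: comp_on_def)
    moreover have "comp_on n T P \<epsilon> D {fst u<..<fst v1}" using co lt by (auto simp: comp_on_def)
    ultimately show False using merge_part_not_component[OF 3(2,3) u1] by blast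
  qed
qed

lemma reeb_edge_target_unique:
  assumes v: "valid_input n \<tau> T P \<epsilon>"
    and e1: "(u, D, v1) \<in> reeb_edges n \<tau> T P \<epsilon>" and e2: "(u, D, v2) \<in> reeb_edges n \<tau> T P \<epsilon>"
  shows "v1 = v2"
proof -
  have s: "fst v1 = fst v2"
    using reeb_edge_target_not_before[OF v e1 e2] reeb_edge_target_not_before[OF v e2 e1] by simp
  have before: "fst u < fst v1" "comp_on n T P \<epsilon> D {fst u<..<fst v1}"
    using e1 by (simp_all add: reeb_edges_def)
  \<comment> \<open>the incoming part of a merge is no component at the merge time; that of an end or split vertex is\<close>
  have merge_cases: "(\<exists>C. w = (fst v1, C, MergeV) \<and> is_merge n \<tau> T P \<epsilon> (fst v1) C) \<or>
      (D \<in> components n T P \<epsilon> (fst v1) \<and> (w = (fst v1, D, EndV) \<and> fst v1 = T \<tau> \<or>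
        w = (fst v1, D, SplitV) \<and> fst v1 < T \<tau>))"
    if "(u, D, w) \<in> reeb_edges n \<tau> T P \<epsilon>" "fst w = fst v1" for w
    using that(1)
  proof (cases rule: reeb_edge_target_cases)
    case 1
    then show ?thesis using that(2) by auto
  next
    case 2
    then show ?thesis using that(2) by (auto simp: is_split_def)
  next
    case (3 C)
    then show ?thesis using that(2) by auto
  qed
  have not_both: False if "is_merge n \<tau> T P \<epsilon> (fst v1) C" "D \<in> components n T P \<epsilon> (fst v1)"
    "w = (fst v1, C, MergeV)" "(u, D, w) \<in> reeb_edges n \<tau> T P \<epsilon>" for C w
  proof -
    have "D \<subseteq> C" using that(3,4) by (auto simp: reeb_edges_def parts_before_def)
    then show False using merge_part_not_component[OF that(1) _ before] that(2) by blast
  qed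
  show ?thesis
  proof (cases "D \<in> components n T P \<epsilon> (fst v1)")
    case True
    have "(w = (fst v1, D, EndV) \<and> fst v1 = T \<tau>) \<or> (w = (fst v1, D, SplitV) \<and> fst v1 < T \<tau>)"
      if "(u, D, w) \<in> reeb_edges n \<tau> T P \<epsilon>" "fst w = fst v1" for w
      using merge_cases[OF that] not_both[OF _ True _ that(1)] True by blast
    from this[OF e1 refl] this[OF e2 s[symmetric]] show ?thesis by auto
  next
    case False
    then obtain C1 C2 where "v1 = (fst v1, C1, MergeV)" "is_merge n \<tau> T P \<epsilon> (fst v1) C1"
      "v2 = (fst v1, C2, MergeV)" "is_merge n \<tau> T P \<epsilon> (fst v1) C2"
      using merge_cases[OF e1 refl] merge_cases[OF e2 s[symmetric]] by blast
    then show ?thesis using merge_unique[OF v] by metis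
  qed
qed

lemma finite_card_reeb_edges:
  assumes v: "valid_input n \<tau> T P \<epsilon>"
  shows "finite (reeb_edges n \<tau> T P \<epsilon>) \<and> card (reeb_edges n \<tau> T P \<epsilon>) \<le> 2 * card (reeb_vertices n \<tau> T P \<epsilon>)"
proof -
  let ?V = "reeb_vertices n \<tau> T P \<epsilon>" and ?E = "reeb_edges n \<tau> T P \<epsilon>"
  let ?g = "\<lambda>(u::vertex, D::nat set, v::vertex). (u, D)"
  have finV: "finite ?V" using finite_card_reeb_vertices[OF v] by simp
  have inj: "inj_on ?g ?E"
  proof (rule inj_onI)
    fix e e' assume e: "e \<in> ?E" "e' \<in> ?E" "?g e = ?g e'"
    obtain u D w where e1: "e = (u, D, w)" by (cases e)
    obtain u' D' w' where e2: "e' = (u', D', w')" by (cases e')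
    have "u' = u" "D' = D" using e(3) e1 e2 by simp_all
    then show "e = e'" using reeb_edge_target_unique[OF v] e(1,2) e1 e2 by simp
  qed
  have sub: "?g ` ?E \<subseteq> Sigma ?V (out_sets n T P \<epsilon>)" by (auto simp: reeb_edges_def)
  have out: "finite (out_sets n T P \<epsilon> u)" "card (out_sets n T P \<epsilon> u) \<le> 2" if "u \<in> ?V" for u
    using finite_card_out_sets[OF v that] by simp_all
  have finS: "finite (Sigma ?V (out_sets n T P \<epsilon>))" using finV out(1) by (rule finite_SigmaI)
  have "card (Sigma ?V (out_sets n T P \<epsilon>)) = (\<Sum>u\<in>?V. card (out_sets n T P \<epsilon> u))"
    using finV out(1) by (simp add: card_SigmaI)
  also have "\<dots> \<le> card ?V * 2"
    using sum_bounded_above[of ?V "\<lambda>u. card (out_sets n T P \<epsilon> u)" 2] out(2) by simp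
  finally show ?thesis
    using finite_imageD[OF finite_subset[OF sub finS] inj] card_inj_on_le[OF inj sub finS] by simp
qed

lemma reeb_graph_size_le:
  assumes "valid_input n \<tau> T P \<epsilon>"
  shows "finite (reeb_vertices n \<tau> T P \<epsilon>) \<and> finite (reeb_edges n \<tau> T P \<epsilon>) \<and>
    real (card (reeb_vertices n \<tau> T P \<epsilon>)) \<le> 8 * real \<tau> * real n ^ 2 \<and>
    real (card (reeb_edges n \<tau> T P \<epsilon>)) \<le> 8 * real \<tau> * real n ^ 2"
proof -
  have V: "card (reeb_vertices n \<tau> T P \<epsilon>) \<le> 8 * n * n * \<tau>"
    and E: "card (reeb_edges n \<tau> T P \<epsilon>) \<le> 8 * n * n * \<tau>"
    using finite_card_reeb_vertices[OF assms] finite_card_reeb_edges[OF assms] by linarith+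
  have eq: "real (8 * n * n * \<tau>) = 8 * real \<tau> * real n ^ 2" by (simp add: power2_eq_square)
  show ?thesis
    using finite_card_reeb_vertices[OF assms] finite_card_reeb_edges[OF assms]
      of_nat_mono[OF V, where 'a = real] of_nat_mono[OF E, where 'a = real]
    unfolding eq by blast
qed

section \<open>A quadratic lower bound\<close>

lemma of_nat_dist_ge_one: "(a::nat) \<noteq> b \<Longrightarrow> 1 \<le> \<bar>real a - real b\<bar>"
  by (cases "a < b") auto

text \<open>The entities \<open>k < m\<close> stand still at \<open>-k\<close> on a line; each \<open>x \<ge> m\<close> moves between
  \<open>(x - m) m + 1/2\<close> and \<open>n\<^sup>2\<close> below it, downwards on even and upwards on odd edges. The signed
  distance of \<open>x\<close> and \<open>k\<close> is \<open>level x k + 1/2 - n\<^sup>2 wave t\<close>, and the levels are distinct integers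
  below \<open>n\<^sup>2\<close>. With radius \<open>1/8\<close> every such pair is therefore directly connected during exactly one
  time window per edge, and the windows of different pairs are disjoint.\<close>

locale reeb_lower_bound =
  fixes n \<tau> :: nat
  assumes two_le_n: "2 \<le> n" and one_le_tau: "1 \<le> \<tau>"
begin

definition "m = n div 2"
definition "amp = real (n * n)"
definition sample_time :: "nat \<Rightarrow> real" where "sample_time i = real i"
definition sample_height :: "nat \<Rightarrow> nat \<Rightarrow> real" where
  "sample_height x i =
     (if x < m then - real x else real ((x - m) * m) + 1/2 - (if even i then 0 else amp))"
definition axis_vec :: "real^2" where "axis_vec = axis 1 1"
definition sample_pos :: "nat \<Rightarrow> nat \<Rightarrow> real^2" where
  "sample_pos x i = sample_height x i *\<^sub>R axis_vec"
definition "radius = (1/8 :: real)"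
definition wave :: "real \<Rightarrow> real" where
  "wave t = (let i = seg sample_time t in if even i then t - real i else 1 - (t - real i))"
definition height :: "nat \<Rightarrow> real \<Rightarrow> real" where
  "height x t = (if x < m then - real x else real ((x - m) * m) + 1/2 - amp * wave t)"
definition level :: "nat \<Rightarrow> nat \<Rightarrow> nat" where "level x k = (x - m) * m + k"
definition pair_level :: "nat \<Rightarrow> nat \<Rightarrow> nat" where
  "pair_level x y = (if x < m then level y x else level x y)"
definition "crossing x k = real (level x k) + 1/2"

lemma m_ge_1: "1 \<le> m" using two_le_n by (simp add: m_def)
lemma m_less_n: "m < n" using two_le_n by (simp add: m_def)
lemma amp_pos: "amp > 0" using two_le_n by (simp add: amp_def)

lemma sample_time_increasing: "\<forall>i<k. sample_time i < sample_time (Suc i)"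
  by (simp add: sample_time_def)

lemma pos_eq_height: "pos sample_time sample_pos x t = height x t *\<^sub>R axis_vec"
proof -
  define i where "i = seg sample_time t"
  let ?h = "\<lambda>i. sample_height x i"
  have "pos sample_time sample_pos x t = (?h i + (t - real i) * (?h (Suc i) - ?h i)) *\<^sub>R axis_vec"
    by (simp add: pos_def i_def[symmetric] sample_time_def sample_pos_def algebra_simps Let_def)
  also have "?h i + (t - real i) * (?h (Suc i) - ?h i) = height x t"
    by (cases "even i")
      (auto simp: sample_height_def height_def wave_def i_def[symmetric] Let_def algebra_simps)
  finally show ?thesis .
qed

lemma directly_connected_iff_height:
  "directly_connected sample_time sample_pos radius x y t \<longleftrightarrow> \<bar>height x t - height y t\<bar> \<le> 1/4"
proof -
  have dist: "dist (a *\<^sub>R axis_vec) (b *\<^sub>R axis_vec) = \<bar>a - b\<bar>" for a b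
  proof -
    have "dist (a *\<^sub>R axis_vec) (b *\<^sub>R axis_vec) = norm ((a - b) *\<^sub>R axis_vec)"
      by (simp add: dist_norm scaleR_diff_left)
    then show ?thesis by (simp add: axis_vec_def)
  qed
  show ?thesis unfolding directly_connected_def pos_eq_height dist radius_def by simp
qed

lemma seg_sample_time_bounds:
  assumes "0 \<le> t"
  shows "real (seg sample_time t) \<le> t \<and> t \<le> real (seg sample_time t) + 1"
proof -
  obtain k :: nat where "t \<le> real k" using real_arch_simple by blast
  then have ex: "t \<le> sample_time (Suc k)" by (simp add: sample_time_def)
  have "t \<le> sample_time (Suc (seg sample_time t))"
    unfolding seg_def by (rule LeastI[of "\<lambda>i. t \<le> sample_time (Suc i)", OF ex])
  moreover have "real (seg sample_time t) \<le> t"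
  proof (cases "seg sample_time t")
    case (Suc j)
    then have "\<not> t \<le> sample_time (Suc j)" unfolding seg_def by (metis lessI not_less_Least)
    then show ?thesis using Suc by (simp add: sample_time_def)
  qed (use assms in simp)
  ultimately show ?thesis by (simp add: sample_time_def)
qed

lemma wave_eq:
  assumes "real i < t" "t \<le> real i + 1"
  shows "wave t = (if even i then t - real i else 1 - (t - real i))"
proof -
  have "sample_time i < t" "t \<le> sample_time (Suc i)" using assms by (simp_all add: sample_time_def)
  then have "seg sample_time t = i" using seg_eqI[OF sample_time_increasing[of "Suc i"]] by simp
  then show ?thesis by (simp add: wave_def)
qed

lemma level_inj:
  assumes "\<not> x < m" "\<not> x' < m" "k < m" "k' < m" "level x k = level x' k'"
  shows "x = x' \<and> k = k'"
proof -
  have "level x k div m = x - m" "level x k mod m = k"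
    "level x' k' div m = x' - m" "level x' k' mod m = k'"
    using assms(3,4) by (simp_all add: level_def)
  then have "x - m = x' - m" "k = k'" using assms(5) by metis+
  then show ?thesis using assms(1,2) by simp
qed

lemma level_bound:
  assumes "x < n" "\<not> x < m" "k < m"
  shows "level x k + 1 \<le> n * n"
proof -
  have "level x k + 1 \<le> (x - m + 1) * m" using assms by (simp add: level_def)
  also have "\<dots> \<le> n * n" using assms m_less_n by (intro mult_le_mono) auto
  finally show ?thesis .
qed

lemma directly_connected_mixed:
  assumes "x < n" "y < n" "x \<noteq> y" "directly_connected sample_time sample_pos radius x y t"
  shows "x < m \<longleftrightarrow> \<not> y < m"
proof (rule ccontr)
  assume same: "\<not> ?thesis"
  have close: "\<bar>height x t - height y t\<bar> \<le> 1/4" using assms(4) directly_connected_iff_height by simp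
  show False
  proof (cases "x < m")
    case True
    then have "y < m" using same by simp
    then have "\<bar>height x t - height y t\<bar> = \<bar>real y - real x\<bar>"
      using True by (simp add: height_def abs_minus_commute)
    then show False using of_nat_dist_ge_one[of y x] assms(3) close by simp
  next
    case False
    then have y: "\<not> y < m" using same by simp
    have ne: "(x - m) * m \<noteq> (y - m) * m" using False y assms(3) m_ge_1 by simp
    have "\<bar>height x t - height y t\<bar> = \<bar>real ((x - m) * m) - real ((y - m) * m)\<bar>"
      using False y by (simp add: height_def)
    then show False using of_nat_dist_ge_one[OF ne] close by simp
  qed
qed

lemma directly_connected_iff_pair_level:
  assumes "x < m \<longleftrightarrow> \<not> y < m"
  shows "directly_connected sample_time sample_pos radius x y t \<longleftrightarrow>
    \<bar>real (pair_level x y) + 1/2 - amp * wave t\<bar> \<le> 1/4"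
proof -
  have "\<bar>height x t - height y t\<bar> = \<bar>real (pair_level x y) + 1/2 - amp * wave t\<bar>"
    using assms by (cases "x < m") (auto simp: height_def pair_level_def level_def abs_minus_commute)
  then show ?thesis by (simp add: directly_connected_iff_height)
qed

lemma pair_level_bound:
  assumes "x < n" "y < n" "x < m \<longleftrightarrow> \<not> y < m"
  shows "real (pair_level x y) + 1 \<le> amp"
proof -
  have "pair_level x y + 1 \<le> n * n" using assms level_bound by (auto simp: pair_level_def)
  then show ?thesis unfolding amp_def by linarith
qed

lemma pair_level_inj:
  assumes "x < m \<longleftrightarrow> \<not> y < m" "x' < m \<longleftrightarrow> \<not> y' < m" "pair_level x y = pair_level x' y'"
  shows "{x, y} = {x', y'}"
  using assms unfolding pair_level_def by (cases "x < m"; cases "x' < m") (auto dest: level_inj)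

lemma directly_connected_interior_time:
  assumes "x < n" "y < n" "x \<noteq> y" "directly_connected sample_time sample_pos radius x y s" "0 \<le> s"
  shows "real (seg sample_time s) < s \<and> s < real (seg sample_time s) + 1"
proof -
  define i where "i = seg sample_time s"
  have mix: "x < m \<longleftrightarrow> \<not> y < m" using directly_connected_mixed assms by blast
  have close: "\<bar>real (pair_level x y) + 1/2 - amp * wave s\<bar> \<le> 1/4"
    using directly_connected_iff_pair_level[OF mix] assms by simp
  have "real (pair_level x y) + 1 \<le> amp" using pair_level_bound[OF assms(1,2) mix] .
  with close have wave: "wave s \<noteq> 0" "wave s \<noteq> 1" by auto
  have i: "real i \<le> s" "s \<le> real i + 1" using seg_sample_time_bounds[OF assms(5)] i_def by auto
  have "s \<noteq> real i"
  proof
    assume "s = real i"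
    moreover have "wave s = (if even i then s - real i else 1 - (s - real i))"
      by (simp add: wave_def i_def[symmetric])
    ultimately have "wave s = (if even i then 0 else 1)" by simp
    then show False using wave by (auto split: if_splits)
  qed
  moreover have "s \<noteq> real i + 1"
  proof
    assume "s = real i + 1"
    then show False using wave_eq[of i s] wave by (auto split: if_splits)
  qed
  ultimately show ?thesis using i i_def by auto
qed

lemma no_isolated_connection_time:
  assumes "x < n" "y < n" "x \<noteq> y" "directly_connected sample_time sample_pos radius x y s" "0 \<le> s"
    and before: "\<delta>1 > 0" "\<forall>t\<in>{s - \<delta>1<..<s}. \<not> directly_connected sample_time sample_pos radius x y t"
    and after: "\<delta>2 > 0" "\<forall>t\<in>{s<..<s + \<delta>2}. \<not> directly_connected sample_time sample_pos radius x y t"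
  shows False
proof -
  define i where "i = seg sample_time s"
  have mix: "x < m \<longleftrightarrow> \<not> y < m" using directly_connected_mixed assms by blast
  define q where "q = real (pair_level x y) + 1/2"
  have dck: "directly_connected sample_time sample_pos radius x y t \<longleftrightarrow> \<bar>q - amp * wave t\<bar> \<le> 1/4" for t
    using directly_connected_iff_pair_level[OF mix] q_def by simp
  have close: "\<bar>q - amp * wave s\<bar> \<le> 1/4" using dck assms by simp
  have si: "real i < s" "s < real i + 1" using directly_connected_interior_time[OF assms(1-5)] i_def by auto
  \<comment> \<open>a step of length \<open>h\<close> to either side stays on the edge and changes \<open>amp * wave\<close> by \<open>amp * h \<le> 1/4\<close>\<close>
  define h where "h = min (min \<delta>1 \<delta>2) (min (min (s - real i) (real i + 1 - s)) (1 / (4 * amp))) / 2"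
  have hpos: "h > 0" using si before after amp_pos by (simp add: h_def)
  have h1a: "h < \<delta>1" using hpos by (auto simp: h_def)
  have h1b: "h < \<delta>2" using hpos by (auto simp: h_def)
  have h1c: "h < s - real i" using hpos by (auto simp: h_def)
  have h1d: "h < real i + 1 - s" using hpos by (auto simp: h_def)
  have h1e: "h \<le> 1 / (4 * amp)"
  proof -
    define M where "M = min (min \<delta>1 \<delta>2) (min (min (s - real i) (real i + 1 - s)) (1 / (4 * amp)))"
    have "M \<le> 1 / (4 * amp)" unfolding M_def by linarith
    moreover have "h = M / 2" by (simp add: h_def M_def)
    moreover have "M > 0" using hpos \<open>h = M/2\<close> by simp
    ultimately show ?thesis by linarith
  qed
  note h1 = h1a h1b h1c h1d h1e
  have amp_h: "amp * h \<le> 1/4" using h1(5) amp_pos by (simp add: field_simps)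
  have amp_h_pos: "amp * h > 0" using hpos amp_pos by simp
  have Wp: "wave (s + h) = wave s + (if even i then h else - h)"
    using wave_eq[of i "s+h"] wave_eq[of i s] si h1 hpos by (cases "even i") auto
  have Wm: "wave (s - h) = wave s - (if even i then h else - h)"
    using wave_eq[of i "s-h"] wave_eq[of i s] si h1 hpos by (cases "even i") auto
  have np: "\<not> \<bar>q - amp * wave (s + h)\<bar> \<le> 1/4" using after h1 hpos dck by simp
  have nm: "\<not> \<bar>q - amp * wave (s - h)\<bar> \<le> 1/4" using before h1 hpos dck by simp
  show False
  proof (cases "even i")
    case True
    have "q - amp * wave (s + h) = (q - amp * wave s) - amp * h" by (subst Wp) (simp add: True algebra_simps)
    moreover have "q - amp * wave (s - h) = (q - amp * wave s) + amp * h" by (subst Wm) (simp add: True algebra_simps)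
    ultimately show False using np nm close amp_h amp_h_pos unfolding abs_le_iff by linarith
  next
    case False
    have "q - amp * wave (s + h) = (q - amp * wave s) + amp * h" by (subst Wp) (simp add: False algebra_simps)
    moreover have "q - amp * wave (s - h) = (q - amp * wave s) - amp * h" by (subst Wm) (simp add: False algebra_simps)
    ultimately show False using np nm close amp_h amp_h_pos unfolding abs_le_iff by linarith
  qed
qed

lemma general_position_instance: "general_position n \<tau> sample_time sample_pos radius"
  unfolding general_position_def
proof (intro allI impI)
  fix x y s b x' y' b'
  assume ev: "pair_event n \<tau> sample_time sample_pos radius x y s b \<and>
    pair_event n \<tau> sample_time sample_pos radius x' y' s b'"
  have e: "x < n" "y < n" "x \<noteq> y" "directly_connected sample_time sample_pos radius x y s" "0 \<le> s"
    using ev by (auto simp: pair_event_def becomes_connected_def becomes_disconnected_def sample_time_def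
      split: if_splits)
  have e': "x' < n" "y' < n" "x' \<noteq> y'" "directly_connected sample_time sample_pos radius x' y' s"
    using ev by (auto simp: pair_event_def becomes_connected_def becomes_disconnected_def split: if_splits)
  have mix: "x < m \<longleftrightarrow> \<not> y < m" "x' < m \<longleftrightarrow> \<not> y' < m"
    using directly_connected_mixed e e' by blast+
  have "\<bar>real (pair_level x y) + 1/2 - amp * wave s\<bar> \<le> 1/4"
    "\<bar>real (pair_level x' y') + 1/2 - amp * wave s\<bar> \<le> 1/4"
    using directly_connected_iff_pair_level[OF mix(1)] directly_connected_iff_pair_level[OF mix(2)] e e'
    by simp_all
  then have "\<bar>real (pair_level x y) - real (pair_level x' y')\<bar> < 1"
    unfolding abs_le_iff abs_less_iff by linarith
  then have "pair_level x y = pair_level x' y'" using of_nat_dist_ge_one by force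
  then have same: "{x, y} = {x', y'}" using pair_level_inj mix by blast
  moreover have "b = b'"
  proof (rule ccontr)
    assume "b \<noteq> b'"
    have "directly_connected sample_time sample_pos radius x' y' t \<longleftrightarrow>
      directly_connected sample_time sample_pos radius x y t" for t
      using same directly_connected_sym by (metis doubleton_eq_iff)
    \<comment> \<open>one of the two events is a connection, the other a disconnection of the same pair\<close>
    then obtain \<delta>1 \<delta>2 where "\<delta>1 > 0" "\<forall>t\<in>{s - \<delta>1<..<s}. \<not> directly_connected sample_time sample_pos radius x y t"
      "\<delta>2 > 0" "\<forall>t\<in>{s<..<s + \<delta>2}. \<not> directly_connected sample_time sample_pos radius x y t"
      using ev \<open>b \<noteq> b'\<close>
      by (cases b) (auto simp: pair_event_def becomes_connected_def becomes_disconnected_def)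
    then show False using no_isolated_connection_time[OF e] by blast
  qed
  ultimately show "{x, y} = {x', y'} \<and> b = b'" by simp
qed

lemma valid_input_instance: "valid_input n \<tau> sample_time sample_pos radius"
  using one_le_tau sample_time_increasing general_position_instance
  by (simp add: valid_input_def radius_def)

lemma neighbour_of_oscillating:
  assumes x: "\<not> x < m" "x < n" and k: "k < m" and near: "\<bar>crossing x k - amp * wave t\<bar> < 1/2"
    and y: "y < n" "directly_connected sample_time sample_pos radius x y t" "y \<noteq> x"
  shows "y = k \<and> \<bar>crossing x k - amp * wave t\<bar> \<le> 1/4"
proof -
  have "x < m \<longleftrightarrow> \<not> y < m" using directly_connected_mixed[OF x(2) y(1) y(3)[symmetric] y(2)] by simp
  then have ym: "y < m" and close: "\<bar>real (level x y) + 1/2 - amp * wave t\<bar> \<le> 1/4"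
    using directly_connected_iff_pair_level[of x y] y(2) x(1) by (simp_all add: pair_level_def)
  then have "\<bar>real (level x y) - real (level x k)\<bar> < 1"
    using near unfolding crossing_def abs_le_iff abs_less_iff by linarith
  then have "level x y = level x k" using of_nat_dist_ge_one by force
  then have "y = k" using level_inj[OF x(1) x(1) ym k] by simp
  then show ?thesis using close by (simp add: crossing_def)
qed

lemma neighbour_of_stationary:
  assumes x: "\<not> x < m" "x < n" and k: "k < m" and near: "\<bar>crossing x k - amp * wave t\<bar> < 1/2"
    and y: "y < n" "directly_connected sample_time sample_pos radius k y t" "y \<noteq> k"
  shows "y = x \<and> \<bar>crossing x k - amp * wave t\<bar> \<le> 1/4"
proof -
  have "k < m \<longleftrightarrow> \<not> y < m" using directly_connected_mixed[OF _ y(1) y(3)[symmetric] y(2)] k m_less_n by simp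
  then have ym: "\<not> y < m" and close: "\<bar>real (level y k) + 1/2 - amp * wave t\<bar> \<le> 1/4"
    using directly_connected_iff_pair_level[of k y] y(2) k by (simp_all add: pair_level_def)
  then have "\<bar>real (level y k) - real (level x k)\<bar> < 1"
    using near unfolding crossing_def abs_le_iff abs_less_iff by linarith
  then have "level y k = level x k" using of_nat_dist_ge_one by force
  then have "y = x" using level_inj[OF ym x(1) k k] by simp
  then show ?thesis using close by (simp add: crossing_def)
qed

lemma pair_component:
  assumes x: "\<not> x < m" "x < n" and k: "k < m" and close: "\<bar>crossing x k - amp * wave t\<bar> \<le> 1/4"
  shows "{x, k} \<in> components n sample_time sample_pos radius t"
proof -
  let ?r = "direct_rel n sample_time sample_pos radius t"
  have near: "\<bar>crossing x k - amp * wave t\<bar> < 1/2" using close by simp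
  have "?r `` {x, k} \<subseteq> {x, k}"
  proof
    fix w assume "w \<in> ?r `` {x, k}"
    then obtain z where "z \<in> {x, k}" "(z, w) \<in> ?r" by auto
    then show "w \<in> {x, k}"
      using neighbour_of_oscillating[OF x k near, of w] neighbour_of_stationary[OF x k near, of w]
      by (cases "w = z") auto
  qed
  then have "?r\<^sup>* `` {x} \<subseteq> {x, k}" using Image_closed_trancl[of ?r "{x, k}"] by blast
  moreover have "directly_connected sample_time sample_pos radius x k t"
    using directly_connected_iff_pair_level[of x k] close x k by (simp add: pair_level_def crossing_def)
  then have "k \<in> ?r\<^sup>* `` {x}" using x k m_less_n by auto
  ultimately have "?r\<^sup>* `` {x} = {x, k}" by auto
  then show ?thesis using x unfolding components_eq_quotient quotient_def by blast
qed

lemma singleton_components: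
  assumes x: "\<not> x < m" "x < n" and k: "k < m"
    and far: "1/4 < \<bar>crossing x k - amp * wave t\<bar>" "\<bar>crossing x k - amp * wave t\<bar> < 1/2"
  shows "{x} \<in> components n sample_time sample_pos radius t \<and> {k} \<in> components n sample_time sample_pos radius t"
proof -
  let ?r = "direct_rel n sample_time sample_pos radius t"
  have "?r `` {x} \<subseteq> {x}" "?r `` {k} \<subseteq> {k}"
    using neighbour_of_oscillating[OF x k far(2)] neighbour_of_stationary[OF x k far(2)] far(1) by force+
  then have "?r\<^sup>* `` {x} = {x}" "?r\<^sup>* `` {k} = {k}" by (simp_all add: Image_closed_trancl)
  then show ?thesis using x k m_less_n unfolding components_eq_quotient quotient_def by auto
qed

definition merge_time :: "nat \<Rightarrow> nat \<Rightarrow> nat \<Rightarrow> real" where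
  "merge_time i x k =
     (if even i then real i + (crossing x k - 1/4) / amp else real i + 1 - (crossing x k + 1/4) / amp)"
definition split_time :: "nat \<Rightarrow> nat \<Rightarrow> nat \<Rightarrow> real" where
  "split_time i x k =
     (if even i then real i + (crossing x k + 1/4) / amp else real i + 1 - (crossing x k - 1/4) / amp)"
definition "gap = 1 / (4 * amp)"

lemma amp_gap: "amp * gap = 1/4" "gap > 0" using amp_pos by (auto simp: gap_def)

lemma merge_split_times_bounds:
  assumes x: "\<not> x < m" "x < n" and k: "k < m"
  shows "real i \<le> merge_time i x k - gap" "merge_time i x k < split_time i x k"
    "split_time i x k + gap \<le> real i + 1"
proof -
  have "real (level x k) + 1 \<le> amp" using level_bound[OF x(2,1) k] unfolding amp_def by linarith
  then have q: "1/2 \<le> crossing x k" "crossing x k + 1/2 \<le> amp" by (simp_all add: crossing_def)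
  have "(crossing x k - 1/4) / amp - gap = (crossing x k - 1/2) / amp"
    "(crossing x k + 1/4) / amp + gap = (crossing x k + 1/2) / amp"
    using amp_pos by (simp_all add: gap_def field_simps)
  moreover have "(crossing x k - 1/2) / amp \<ge> 0" "(crossing x k + 1/2) / amp \<le> 1"
    using q amp_pos by simp_all
  moreover have "(crossing x k - 1/4) / amp < (crossing x k + 1/4) / amp"
    using amp_pos by (simp add: divide_strict_right_mono)
  ultimately show "real i \<le> merge_time i x k - gap" "merge_time i x k < split_time i x k"
    "split_time i x k + gap \<le> real i + 1"
    by (simp_all add: merge_time_def split_time_def)
qed

lemma amp_wave_eq:
  assumes "real i < t" "t < real i + 1"
  shows "amp * wave t = (if even i then crossing x k - 1/4 + amp * (t - merge_time i x k)
                                  else crossing x k + 1/4 - amp * (t - merge_time i x k))"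
    "amp * wave t = (if even i then crossing x k + 1/4 + amp * (t - split_time i x k)
                               else crossing x k - 1/4 - amp * (t - split_time i x k))"
  using amp_pos wave_eq[of i t] assms by (simp_all add: merge_time_def split_time_def field_simps)

lemma crossing_close_between:
  assumes x: "\<not> x < m" "x < n" and k: "k < m" and t: "merge_time i x k \<le> t" "t \<le> split_time i x k"
  shows "\<bar>crossing x k - amp * wave t\<bar> \<le> 1/4"
proof -
  have "real i < t" "t < real i + 1" using merge_split_times_bounds[OF x k, of i] t amp_gap by linarith+
  moreover have "amp * (t - merge_time i x k) \<ge> 0" "amp * (t - split_time i x k) \<le> 0"
    using amp_pos t by (simp_all add: mult_nonneg_nonpos)
  ultimately show ?thesis using amp_wave_eq[of i t x k] unfolding abs_le_iff by (cases "even i") auto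
qed

lemma crossing_far_before:
  assumes x: "\<not> x < m" "x < n" and k: "k < m" and t: "merge_time i x k - gap < t" "t < merge_time i x k"
  shows "1/4 < \<bar>crossing x k - amp * wave t\<bar> \<and> \<bar>crossing x k - amp * wave t\<bar> < 1/2"
proof -
  have "real i < t" "t < real i + 1" using merge_split_times_bounds[OF x k, of i] t amp_gap by linarith+
  moreover have "amp * (t - merge_time i x k) < 0" using amp_pos t by (simp add: mult_pos_neg)
  moreover have "amp * (-gap) < amp * (t - merge_time i x k)"
    using amp_pos t by (intro mult_strict_left_mono) auto
  ultimately show ?thesis using amp_wave_eq(1)[of i t x k] amp_gap unfolding abs_less_iff
    by (cases "even i") auto
qed

lemma crossing_far_after:
  assumes x: "\<not> x < m" "x < n" and k: "k < m" and t: "split_time i x k < t" "t < split_time i x k + gap"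
  shows "1/4 < \<bar>crossing x k - amp * wave t\<bar> \<and> \<bar>crossing x k - amp * wave t\<bar> < 1/2"
proof -
  have "real i < t" "t < real i + 1" using merge_split_times_bounds[OF x k, of i] t amp_gap by linarith+
  moreover have "amp * (t - split_time i x k) > 0" using amp_pos t by simp
  moreover have "amp * (t - split_time i x k) < amp * gap"
    using amp_pos t by (intro mult_strict_left_mono) auto
  ultimately show ?thesis using amp_wave_eq(2)[of i t x k] amp_gap unfolding abs_less_iff
    by (cases "even i") auto
qed

lemma is_merge_at_merge_time:
  assumes x: "\<not> x < m" "x < n" and k: "k < m" and i: "i < \<tau>"
  shows "is_merge n \<tau> sample_time sample_pos radius (merge_time i x k) {x, k}"
proof -
  have tm: "real i \<le> merge_time i x k - gap" "merge_time i x k < split_time i x k"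
    "split_time i x k + gap \<le> real i + 1"
    using merge_split_times_bounds[OF x k] by auto
  then have s: "sample_time 0 < merge_time i x k" "merge_time i x k \<le> sample_time \<tau>"
    using i amp_gap by (auto simp: sample_time_def)
  have C: "{x, k} \<in> components n sample_time sample_pos radius (merge_time i x k)"
    using pair_component[OF x k crossing_close_between[OF x k order_refl less_imp_le[OF tm(2)]]] .
  have "{x} \<in> components n sample_time sample_pos radius t \<and> {k} \<in> components n sample_time sample_pos radius t"
    if "t \<in> {merge_time i x k - gap<..<merge_time i x k}" for t
    using singleton_components[OF x k] crossing_far_before[OF x k, of i t] that by simp
  then show ?thesis unfolding is_merge_def comp_on_def
    using s C x k amp_gap by (intro conjI exI[of _ "{x}"] exI[of _ "{k}"] exI[of _ gap]) auto
qed

lemma is_split_at_split_time: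
  assumes x: "\<not> x < m" "x < n" and k: "k < m" and i: "i < \<tau>"
  shows "is_split n \<tau> sample_time sample_pos radius (split_time i x k) {x, k}"
proof -
  have tm: "real i \<le> merge_time i x k - gap" "merge_time i x k < split_time i x k"
    "split_time i x k + gap \<le> real i + 1"
    using merge_split_times_bounds[OF x k] by auto
  then have s: "sample_time 0 \<le> split_time i x k" "split_time i x k < sample_time \<tau>"
    using i amp_gap by (auto simp: sample_time_def)
  have C: "{x, k} \<in> components n sample_time sample_pos radius (split_time i x k)"
    using pair_component[OF x k crossing_close_between[OF x k less_imp_le[OF tm(2)] order_refl]] .
  have "{x} \<in> components n sample_time sample_pos radius t \<and> {k} \<in> components n sample_time sample_pos radius t"
    if "t \<in> {split_time i x k<..<split_time i x k + gap}" for t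
    using singleton_components[OF x k] crossing_far_after[OF x k, of i t] that by simp
  then show ?thesis unfolding is_split_def comp_on_def
    using s C x k amp_gap by (intro conjI exI[of _ "{x}"] exI[of _ "{k}"] exI[of _ gap]) auto
qed

lemma merge_split_edge:
  assumes x: "\<not> x < m" "x < n" and k: "k < m" and i: "i < \<tau>"
  shows "((merge_time i x k, {x, k}, MergeV), {x, k}, (split_time i x k, {x, k}, SplitV))
    \<in> reeb_edges n \<tau> sample_time sample_pos radius"
proof -
  have "comp_on n sample_time sample_pos radius {x, k} {merge_time i x k<..<split_time i x k}"
    unfolding comp_on_def
  proof
    fix t assume "t \<in> {merge_time i x k<..<split_time i x k}"
    then show "{x, k} \<in> components n sample_time sample_pos radius t"
      using pair_component[OF x k crossing_close_between[OF x k, of i t]] by simp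
  qed
  then show ?thesis unfolding reeb_edges_def reeb_vertices_def
    using is_merge_at_merge_time[OF x k i] is_split_at_split_time[OF x k i]
      merge_split_times_bounds(2)[OF x k] by auto
qed

lemma merge_time_inj:
  assumes x: "\<not> x < m" "x < n" and k: "k < m" and x': "\<not> x' < m" "x' < n" and k': "k' < m"
    and eq: "merge_time i x k = merge_time i' x' k'"
  shows "i = i' \<and> x = x' \<and> k = k'"
proof -
  have "real i < merge_time i x k" "merge_time i x k < real i + 1"
    "real i' < merge_time i' x' k'" "merge_time i' x' k' < real i' + 1"
    using merge_split_times_bounds[OF x k, of i] merge_split_times_bounds[OF x' k', of i'] amp_gap
    by linarith+
  then have "real i < real i' + 1" "real i' < real i + 1" using eq by linarith+
  then have i: "i = i'" by linarith
  then have "crossing x k = crossing x' k'"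
    using eq amp_pos by (cases "even i") (simp_all add: merge_time_def)
  then have "level x k = level x' k'" by (simp add: crossing_def)
  then show ?thesis using level_inj[OF x(1) x'(1) k k'] i by simp
qed

lemma reeb_graph_size_ge:
  "\<tau> * ((n - m) * m) \<le> card (reeb_vertices n \<tau> sample_time sample_pos radius) \<and>
   \<tau> * ((n - m) * m) \<le> card (reeb_edges n \<tau> sample_time sample_pos radius)"
proof -
  let ?I = "{..<\<tau>} \<times> {m..<n} \<times> {..<m}"
  define f where "f = (\<lambda>(i, x, k). (merge_time i x k, {x, k}, MergeV))"
  define g where "g = (\<lambda>(i, x, k). (f (i, x, k), {x, k}, (split_time i x k, {x, k}, SplitV)))"
  have inj_f: "inj_on f ?I"
  proof (rule inj_onI)
    fix p q assume pq: "p \<in> ?I" "q \<in> ?I" "f p = f q"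
    obtain i x k where p: "p = (i, x, k)" by (cases p)
    obtain i' x' k' where q: "q = (i', x', k')" by (cases q)
    have "merge_time i x k = merge_time i' x' k'" using pq(3) by (simp add: p q f_def)
    then show "p = q" using merge_time_inj[of x k x' k' i i'] pq(1,2) by (simp add: p q)
  qed
  have "inj_on (fst \<circ> g) ?I" using inj_f by (simp add: g_def case_prod_beta comp_def)
  then have inj_g: "inj_on g ?I" by (rule inj_on_imageI2)
  have "f ` ?I \<subseteq> reeb_vertices n \<tau> sample_time sample_pos radius"
    using is_merge_at_merge_time by (auto simp: f_def reeb_vertices_def)
  then have "card ?I \<le> card (reeb_vertices n \<tau> sample_time sample_pos radius)"
    using card_inj_on_le[OF inj_f] finite_card_reeb_vertices[OF valid_input_instance] by blast
  moreover have "g ` ?I \<subseteq> reeb_edges n \<tau> sample_time sample_pos radius"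
    using merge_split_edge by (auto simp: g_def f_def)
  then have "card ?I \<le> card (reeb_edges n \<tau> sample_time sample_pos radius)"
    using card_inj_on_le[OF inj_g] finite_card_reeb_edges[OF valid_input_instance] by blast
  ultimately show ?thesis by (simp add: card_cartesian_product)
qed

lemma reeb_graph_size_ge_real:
  "valid_input n \<tau> sample_time sample_pos radius \<and>
   finite (reeb_vertices n \<tau> sample_time sample_pos radius) \<and>
   finite (reeb_edges n \<tau> sample_time sample_pos radius) \<and>
   1/6 * real \<tau> * real n ^ 2 \<le> real (card (reeb_vertices n \<tau> sample_time sample_pos radius)) \<and>
   1/6 * real \<tau> * real n ^ 2 \<le> real (card (reeb_edges n \<tau> sample_time sample_pos radius))"
proof -
  have "n \<le> 3 * m" "n \<le> 2 * (n - m)" using two_le_n unfolding m_def by linarith+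
  then have "n * n \<le> (3 * m) * (2 * (n - m))" by (rule mult_le_mono)
  then have "n * n \<le> 6 * ((n - m) * m)" by (simp add: algebra_simps)
  then have "\<tau> * (n * n) \<le> \<tau> * (6 * ((n - m) * m))" by simp
  then have "real (\<tau> * (n * n)) \<le> real (\<tau> * (6 * ((n - m) * m)))" by linarith
  then have "1/6 * real \<tau> * real n ^ 2 \<le> real (\<tau> * ((n - m) * m))"
    by (simp add: power2_eq_square algebra_simps)
  then show ?thesis
    using reeb_graph_size_ge valid_input_instance finite_card_reeb_vertices finite_card_reeb_edges
    by (smt (verit) of_nat_le_iff)
qed

end

theorem theorem2:
  shows "(\<exists>c::real. \<forall>(n::nat) (\<tau>::nat) (T::nat \<Rightarrow> real) (P::nat \<Rightarrow> nat \<Rightarrow> real^2) (\<epsilon>::real).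
            valid_input n \<tau> T P \<epsilon> \<longrightarrow>
              finite (reeb_vertices n \<tau> T P \<epsilon>) \<and> finite (reeb_edges n \<tau> T P \<epsilon>) \<and>
              real (card (reeb_vertices n \<tau> T P \<epsilon>)) \<le> c * real \<tau> * real n ^ 2 \<and>
              real (card (reeb_edges n \<tau> T P \<epsilon>)) \<le> c * real \<tau> * real n ^ 2)
       \<and> (\<exists>c::real. c > 0 \<and> (\<exists>N::nat. \<forall>n \<ge> N. \<forall>\<tau> \<ge> 1.
            \<exists>(T::nat \<Rightarrow> real) (P::nat \<Rightarrow> nat \<Rightarrow> real^2) (\<epsilon>::real).
              valid_input n \<tau> T P \<epsilon> \<and>
              finite (reeb_vertices n \<tau> T P \<epsilon>) \<and> finite (reeb_edges n \<tau> T P \<epsilon>) \<and>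
              real (card (reeb_vertices n \<tau> T P \<epsilon>)) \<ge> c * real \<tau> * real n ^ 2 \<and>
              real (card (reeb_edges n \<tau> T P \<epsilon>)) \<ge> c * real \<tau> * real n ^ 2))"
proof (intro conjI)
  show "\<exists>c::real. \<forall>(n::nat) (\<tau>::nat) (T::nat \<Rightarrow> real) (P::nat \<Rightarrow> nat \<Rightarrow> real^2) (\<epsilon>::real).
            valid_input n \<tau> T P \<epsilon> \<longrightarrow>
              finite (reeb_vertices n \<tau> T P \<epsilon>) \<and> finite (reeb_edges n \<tau> T P \<epsilon>) \<and>
              real (card (reeb_vertices n \<tau> T P \<epsilon>)) \<le> c * real \<tau> * real n ^ 2 \<and>
              real (card (reeb_edges n \<tau> T P \<epsilon>)) \<le> c * real \<tau> * real n ^ 2"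
    by (intro exI[of _ 8] allI impI) (rule reeb_graph_size_le)
  show "\<exists>c::real. c > 0 \<and> (\<exists>N::nat. \<forall>n \<ge> N. \<forall>\<tau> \<ge> 1.
            \<exists>(T::nat \<Rightarrow> real) (P::nat \<Rightarrow> nat \<Rightarrow> real^2) (\<epsilon>::real).
              valid_input n \<tau> T P \<epsilon> \<and>
              finite (reeb_vertices n \<tau> T P \<epsilon>) \<and> finite (reeb_edges n \<tau> T P \<epsilon>) \<and>
              real (card (reeb_vertices n \<tau> T P \<epsilon>)) \<ge> c * real \<tau> * real n ^ 2 \<and>
              real (card (reeb_edges n \<tau> T P \<epsilon>)) \<ge> c * real \<tau> * real n ^ 2)"
  proof (intro exI[of _ "1/6"] conjI exI[of _ 2] allI impI)
    fix n \<tau> :: nat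
    assume "2 \<le> n" "1 \<le> \<tau>"
    then interpret reeb_lower_bound n \<tau> by unfold_locales
    show "\<exists>T P \<epsilon>. valid_input n \<tau> T P \<epsilon> \<and>
        finite (reeb_vertices n \<tau> T P \<epsilon>) \<and> finite (reeb_edges n \<tau> T P \<epsilon>) \<and>
        real (card (reeb_vertices n \<tau> T P \<epsilon>)) \<ge> 1/6 * real \<tau> * real n ^ 2 \<and>
        real (card (reeb_edges n \<tau> T P \<epsilon>)) \<ge> 1/6 * real \<tau> * real n ^ 2"
      using reeb_graph_size_ge_real by blast
  qed simp
qed

end
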